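(* Let $(\mathbf C,I)$ be a finite-type based chain complex of real inner product spaces, let $M$ be a Morse matching on it, and let $\Phi=\Phi^M:\mathbf C^M\to\mathbf C$, $\Psi=\Psi^M:\mathbf C\to\mathbf C^M$ be the associated Morse retraction. Fix $n$. Then the following two conditions (1) $\mathrm{Proj}_{\operatorname{Ker}\partial_{n+1}^\dagger}(\Phi\Psi s-s)=0$ for all $s\in\mathbf C_n$, and (2) $\mathrm{Proj}_{\operatorname{Ker}\partial_{n-1}}(\Psi^\dagger\Phi^\dagger s-s)=0$ for all $s\in\mathbf C_{n-1}$ hold if and only if $M$ is $(n,n-1)$-free.
   Context: A finite-type based chain complex of real inner product spaces is a chain complex $(\mathbf C,\partial)$ of finite-dimensional real inner product spaces $\mathbf C_n$, $n\ge0$, with pairwise disjoint finite index sets $I=\{I_n\}$ and a direct sum decomposition $\mathbf C_n=\bigoplus_{\alpha\in I_n}C_\alpha$ (summands not necessarily orthogonal); elements of $I_n$ are $n$-cells. $\partial_{\beta,\alpha}=\pi_\beta\circ\partial_n\circ i_\alpha:C_\alpha\to C_\beta$ for $\alpha\in I_n,\beta\in I_{n-1}$ ($i_\alpha$ inclusion, $\pi_\beta$ projection along the other summands). $\dagger$ denotes the adjoint with respect to the inner products (on $\mathbf C^M$ the restricted inner product is used), and $\mathrm{Proj}_W$ is orthogonal projection onto $W$. The graph $\mathcal G(\mathbf C)$ has vertices $\bigcup I_n$ and edges $\alpha\to\beta$ when $\partial_{\beta,\alpha}\neq0$. A Morse matching is a set $M$ of edges with: each vertex on at most one edge of $M$;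 $\partial_{\beta,\alpha}$ an isomorphism for each $\alpha\to\beta\in M$; for each $n$, "there is a directed path from $\alpha$ to $\beta$ in $\mathcal G(\mathbf C)^M$ (edges of $M$ reversed)" is a partial order on $I_n$. $M$ is $(n,n-1)$-free if no edge of $M$ joins an $n$-cell to an $(n-1)$-cell. $M^0$ is the set of unmatched cells. For a directed path in $\mathcal G(\mathbf C)^M$ its index is the composite of $\partial_{\sigma_{i+1},\sigma_i}$ for ordinary steps and $-\partial_{\sigma_i,\sigma_{i+1}}^{-1}$ for reversed matched edges (trivial path: identity); $\Gamma_{\beta,\alpha}$ is the sum of indices of all paths from $\alpha$ to $\beta$. Morse complex: $\mathbf C^M_n=\bigoplus_{\alpha\in I_n\cap M^0}C_\alpha$, boundary $x\mapsto\sum_{\beta\in M^0\cap I_{n-1}}\Gamma_{\beta,\alpha}(x)$. Morse retraction: $\Phi^M(x)=\sum_{\beta\in I_n}\Gamma_{\beta,\alpha}(x)$ for $x\in C_\alpha$, $\alpha\in M^0\cap I_n$; $\Psi^M(x)=\sum_{\beta\in M^0\cap I_n}\Gamma_{\beta,\alpha}(x)$ for $x\in C_\alpha$, $\alpha\in I_n$; homotopy $h(x)=\sum_{\beta\in I_{n+1}}\Gamma_{\beta,\alpha}(x)$. *)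

theory Defs
  imports "HOL-Analysis.Analysis"
begin

text \<open>Encoding: cells have type 'c; I n is the (finite) set of n-cells.
  All summands C alpha live in one ambient real inner product space 'v;
  the n-chains C_n are the (direct) sums of the C alpha, alpha in I n, with the
  inner product of 'v restricted to C_n.  Only level-wise inner products are
  ever used.\<close>

definition chains :: "(nat \<Rightarrow> 'c set) \<Rightarrow> ('c \<Rightarrow> 'v::real_vector set) \<Rightarrow> nat \<Rightarrow> 'v set" where
  "chains I C n = {sum f (I n) | f. \<forall>\<alpha>\<in>I n. f \<alpha> \<in> C \<alpha>}"

definition fin_based_complex ::
  "(nat \<Rightarrow> 'c set) \<Rightarrow> ('c \<Rightarrow> 'v::real_inner set) \<Rightarrow> ('v \<Rightarrow> 'v) \<Rightarrow> bool" where
  "fin_based_complex I C d \<longleftrightarrow>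
     (\<forall>n. finite (I n)) \<and>
     (\<forall>n m. n \<noteq> m \<longrightarrow> I n \<inter> I m = {}) \<and>
     (\<forall>\<alpha>. \<exists>B. finite B \<and> C \<alpha> = span B) \<and>
     (\<forall>n f. (\<forall>\<alpha>\<in>I n. f \<alpha> \<in> C \<alpha>) \<and> sum f (I n) = 0 \<longrightarrow> (\<forall>\<alpha>\<in>I n. f \<alpha> = 0)) \<and>
     (\<forall>n. \<forall>x\<in>chains I C n. \<forall>y\<in>chains I C n. d (x + y) = d x + d y) \<and>
     (\<forall>n c. \<forall>x\<in>chains I C n. d (c *\<^sub>R x) = c *\<^sub>R d x) \<and>
     (\<forall>n. \<forall>x\<in>chains I C (Suc n). d x \<in> chains I C n) \<and>
     (\<forall>x\<in>chains I C 0. d x = 0) \<and>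
     (\<forall>n. \<forall>x\<in>chains I C n. d (d x) = 0)"

definition deg :: "(nat \<Rightarrow> 'c set) \<Rightarrow> 'c \<Rightarrow> nat" where
  "deg I \<alpha> = (THE n. \<alpha> \<in> I n)"

text \<open>pi_beta: the beta-component of an n-chain (projection along the other summands).\<close>
definition comp :: "(nat \<Rightarrow> 'c set) \<Rightarrow> ('c \<Rightarrow> 'v::real_vector set) \<Rightarrow> nat \<Rightarrow> 'c \<Rightarrow> 'v \<Rightarrow> 'v" where
  "comp I C n \<beta> x =
     (THE f. (\<forall>\<gamma>\<in>I n. f \<gamma> \<in> C \<gamma>) \<and> (\<forall>\<gamma>. \<gamma> \<notin> I n \<longrightarrow> f \<gamma> = 0) \<and> sum f (I n) = x) \<beta>"

text \<open>The block partial_{beta,alpha} = pi_beta o d o i_alpha : C alpha \<rightarrow> C beta.\<close>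
definition blk :: "(nat \<Rightarrow> 'c set) \<Rightarrow> ('c \<Rightarrow> 'v::real_vector set) \<Rightarrow> ('v \<Rightarrow> 'v) \<Rightarrow> 'c \<Rightarrow> 'c \<Rightarrow> 'v \<Rightarrow> 'v" where
  "blk I C d \<beta> \<alpha> x = comp I C (deg I \<beta>) \<beta> (d x)"

definition blk_inv :: "(nat \<Rightarrow> 'c set) \<Rightarrow> ('c \<Rightarrow> 'v::real_vector set) \<Rightarrow> ('v \<Rightarrow> 'v) \<Rightarrow> 'c \<Rightarrow> 'c \<Rightarrow> 'v \<Rightarrow> 'v" where
  "blk_inv I C d \<beta> \<alpha> y = (THE x. x \<in> C \<alpha> \<and> blk I C d \<beta> \<alpha> x = y)"

definition edges :: "(nat \<Rightarrow> 'c set) \<Rightarrow> ('c \<Rightarrow> 'v::real_vector set) \<Rightarrow> ('v \<Rightarrow> 'v) \<Rightarrow> ('c \<times> 'c) set" where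
  "edges I C d = {(\<alpha>, \<beta>). \<exists>k. \<alpha> \<in> I (Suc k) \<and> \<beta> \<in> I k \<and> (\<exists>x\<in>C \<alpha>. blk I C d \<beta> \<alpha> x \<noteq> 0)}"

definition medges :: "(nat \<Rightarrow> 'c set) \<Rightarrow> ('c \<Rightarrow> 'v::real_vector set) \<Rightarrow> ('v \<Rightarrow> 'v) \<Rightarrow> ('c \<times> 'c) set \<Rightarrow> ('c \<times> 'c) set" where
  "medges I C d M = (edges I C d - M) \<union> M\<inverse>"

definition mpaths :: "(nat \<Rightarrow> 'c set) \<Rightarrow> ('c \<Rightarrow> 'v::real_vector set) \<Rightarrow> ('v \<Rightarrow> 'v) \<Rightarrow> ('c \<times> 'c) set \<Rightarrow> 'c \<Rightarrow> 'c \<Rightarrow> 'c list set" where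
  "mpaths I C d M \<alpha> \<beta> = {p. p \<noteq> [] \<and> hd p = \<alpha> \<and> last p = \<beta> \<and>
      (\<forall>i. Suc i < length p \<longrightarrow> (p ! i, p ! Suc i) \<in> medges I C d M)}"

definition mstep :: "(nat \<Rightarrow> 'c set) \<Rightarrow> ('c \<Rightarrow> 'v::real_vector set) \<Rightarrow> ('v \<Rightarrow> 'v) \<Rightarrow> ('c \<times> 'c) set \<Rightarrow> 'c \<Rightarrow> 'c \<Rightarrow> 'v \<Rightarrow> 'v" where
  "mstep I C d M a b x = (if (b, a) \<in> M then - blk_inv I C d a b x else blk I C d b a x)"

fun pidx :: "('c \<Rightarrow> 'c \<Rightarrow> 'v \<Rightarrow> 'v) \<Rightarrow> 'c list \<Rightarrow> 'v \<Rightarrow> 'v" where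
  "pidx st [] x = x"
| "pidx st [a] x = x"
| "pidx st (a # b # p) x = pidx st (b # p) (st a b x)"

definition Gamma :: "(nat \<Rightarrow> 'c set) \<Rightarrow> ('c \<Rightarrow> 'v::real_vector set) \<Rightarrow> ('v \<Rightarrow> 'v) \<Rightarrow> ('c \<times> 'c) set \<Rightarrow> 'c \<Rightarrow> 'c \<Rightarrow> 'v \<Rightarrow> 'v" where
  "Gamma I C d M \<beta> \<alpha> x = (\<Sum>p\<in>mpaths I C d M \<alpha> \<beta>. pidx (mstep I C d M) p x)"

definition unmatched :: "('c \<times> 'c) set \<Rightarrow> 'c set" where
  "unmatched M = {\<alpha>. \<alpha> \<notin> Domain M \<and> \<alpha> \<notin> Range M}"

definition morse_matching ::
  "(nat \<Rightarrow> 'c set) \<Rightarrow> ('c \<Rightarrow> 'v::real_vector set) \<Rightarrow> ('v \<Rightarrow> 'v) \<Rightarrow> ('c \<times> 'c) set \<Rightarrow> bool" where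
  "morse_matching I C d M \<longleftrightarrow>
     M \<subseteq> edges I C d \<and>
     (\<forall>e\<in>M. \<forall>e'\<in>M. e \<noteq> e' \<longrightarrow> {fst e, snd e} \<inter> {fst e', snd e'} = {}) \<and>
     (\<forall>(\<alpha>, \<beta>)\<in>M. bij_betw (blk I C d \<beta> \<alpha>) (C \<alpha>) (C \<beta>)) \<and>
     (\<forall>n. partial_order_on (I n) {(\<alpha>, \<beta>). \<alpha> \<in> I n \<and> \<beta> \<in> I n \<and> mpaths I C d M \<alpha> \<beta> \<noteq> {}})"

definition mchains :: "(nat \<Rightarrow> 'c set) \<Rightarrow> ('c \<Rightarrow> 'v::real_vector set) \<Rightarrow> ('c \<times> 'c) set \<Rightarrow> nat \<Rightarrow> 'v set" where
  "mchains I C M n = chains (\<lambda>k. I k \<inter> unmatched M) C n"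

definition Phi :: "(nat \<Rightarrow> 'c set) \<Rightarrow> ('c \<Rightarrow> 'v::real_vector set) \<Rightarrow> ('v \<Rightarrow> 'v) \<Rightarrow> ('c \<times> 'c) set \<Rightarrow> nat \<Rightarrow> 'v \<Rightarrow> 'v" where
  "Phi I C d M n x = (\<Sum>\<alpha>\<in>I n \<inter> unmatched M. \<Sum>\<beta>\<in>I n. Gamma I C d M \<beta> \<alpha> (comp I C n \<alpha> x))"

definition Psi :: "(nat \<Rightarrow> 'c set) \<Rightarrow> ('c \<Rightarrow> 'v::real_vector set) \<Rightarrow> ('v \<Rightarrow> 'v) \<Rightarrow> ('c \<times> 'c) set \<Rightarrow> nat \<Rightarrow> 'v \<Rightarrow> 'v" where
  "Psi I C d M n x = (\<Sum>\<alpha>\<in>I n. \<Sum>\<beta>\<in>I n \<inter> unmatched M. Gamma I C d M \<beta> \<alpha> (comp I C n \<alpha> x))"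

definition adj :: "'v::real_inner set \<Rightarrow> ('v \<Rightarrow> 'w::real_inner) \<Rightarrow> 'w \<Rightarrow> 'v" where
  "adj A f y = (THE z. z \<in> A \<and> (\<forall>a\<in>A. inner (f a) y = inner a z))"

definition oproj :: "'v::real_inner set \<Rightarrow> 'v \<Rightarrow> 'v" where
  "oproj W x = (THE p. p \<in> W \<and> (\<forall>w\<in>W. inner (x - p) w = 0))"

definition nfree :: "(nat \<Rightarrow> 'c set) \<Rightarrow> ('c \<times> 'c) set \<Rightarrow> nat \<Rightarrow> bool" where
  "nfree I M n \<longleftrightarrow> (\<forall>(\<alpha>, \<beta>)\<in>M. \<not> (\<exists>m. n = Suc m \<and> \<alpha> \<in> I n \<and> \<beta> \<in> I m))"

end

theory Submission
  imports Defs
begin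

text \<open>
  Condition (1) says that \<open>\<Phi>\<Psi>s - s\<close> is orthogonal to \<open>Ker \<partial>\<^sup>\<dagger>\<^sub>n\<^sub>+\<^sub>1\<close>, that is, it is a boundary;
  since \<open>\<langle>\<Psi>\<^sup>\<dagger>\<Phi>\<^sup>\<dagger>s, w\<rangle> = \<langle>s, \<Phi>\<Psi>w\<rangle>\<close>, condition (2) holds as soon as \<open>\<Phi>\<Psi>\<close> fixes every
  \<open>(n-1)\<close>-cycle \<open>w\<close>.

  Gradient paths in \<open>\<G>(\<C>)\<^sup>M\<close> go down along ordinary edges and up only along reversed matched
  edges, and never climb two levels. If no \<open>n\<close>-cell is matched with an \<open>(n-1)\<close>-cell, no path
  from a cell of degree \<open>< n\<close> reaches degree \<open>n\<close>. Hence \<open>\<Phi>\<close> is the identity on \<open>\<C>\<^sup>M\<^sub>n\<close> and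
  \<open>\<Phi>\<Psi> - id = \<partial>h\<close> on \<open>\<C>\<^sub>n\<close>, where \<open>h\<close> is the homotopy of the Morse retraction, while in
  degree \<open>n-1\<close> the same path analysis gives \<open>\<Phi>\<Psi> = id + h\<partial>\<close>, the identity on cycles.
  Conversely, if an \<open>n\<close>-cell \<open>\<alpha>\<close> is matched with an \<open>(n-1)\<close>-cell \<open>\<beta>\<close>, then the
  \<open>\<beta>\<close>-component of \<open>\<partial>\<Phi>\<close> vanishes, so for \<open>x \<in> C\<^sub>\<alpha>\<close> with \<open>\<partial>\<^sub>\<beta>\<^sub>,\<^sub>\<alpha>x \<noteq> 0\<close> the boundary of
  \<open>\<Phi>\<Psi>x - x\<close> is nonzero, and \<open>\<Phi>\<Psi>x - x\<close> is not a boundary.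
\<close>

section \<open>Linear maps on subsets, adjoints and projections\<close>

definition linear_on :: "'a::real_vector set \<Rightarrow> ('a \<Rightarrow> 'b::real_vector) \<Rightarrow> bool" where
  "linear_on A f \<longleftrightarrow>
     (\<forall>x\<in>A. \<forall>y\<in>A. f (x + y) = f x + f y) \<and> (\<forall>c. \<forall>x\<in>A. f (c *\<^sub>R x) = c *\<^sub>R f x)"

lemma linear_on_add: "linear_on A f \<Longrightarrow> x \<in> A \<Longrightarrow> y \<in> A \<Longrightarrow> f (x + y) = f x + f y"
  and linear_on_scale: "linear_on A f \<Longrightarrow> x \<in> A \<Longrightarrow> f (c *\<^sub>R x) = c *\<^sub>R f x"
  by (auto simp: linear_on_def)

lemma linear_on_0: "linear_on A f \<Longrightarrow> 0 \<in> A \<Longrightarrow> f 0 = 0"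
  using linear_on_scale[of A f 0 0] by simp

lemma linear_on_neg: "linear_on A f \<Longrightarrow> x \<in> A \<Longrightarrow> f (- x) = - f x"
  using linear_on_scale[of A f x "-1"] by simp

lemma linear_on_diff:
  "linear_on A f \<Longrightarrow> subspace A \<Longrightarrow> x \<in> A \<Longrightarrow> y \<in> A \<Longrightarrow> f (x - y) = f x - f y"
  using linear_on_add[of A f x "- y"] linear_on_neg[of A f y] subspace_neg[of A y] by simp

lemma linear_on_sum:
  assumes "linear_on A f" "subspace A" "\<And>i. i \<in> S \<Longrightarrow> g i \<in> A"
  shows "f (sum g S) = (\<Sum>i\<in>S. f (g i))"
proof (cases "finite S")
  case True
  then show ?thesis using assms(3)
  proof (induction S rule: finite_induct)
    case (insert a S)
    have "sum g S \<in> A" using insert.prems by (intro subspace_sum[OF assms(2)]) auto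
    then show ?case using insert linear_on_add[OF assms(1), of "g a" "sum g S"] by simp
  qed (use linear_on_0[OF assms(1)] assms(2) subspace_0 in auto)
qed (use linear_on_0[OF assms(1)] assms(2) subspace_0 in auto)

lemma linear_on_subset: "linear_on A f \<Longrightarrow> B \<subseteq> A \<Longrightarrow> linear_on B f"
  unfolding linear_on_def by blast

lemma linear_on_compose:
  "linear_on A f \<Longrightarrow> f ` A \<subseteq> B \<Longrightarrow> linear_on B g \<Longrightarrow> linear_on A (\<lambda>x. g (f x))"
  unfolding linear_on_def by (simp add: image_subset_iff)

lemma linear_on_compose_neg: "linear_on A f \<Longrightarrow> linear_on A (\<lambda>x. - f x)"
  unfolding linear_on_def by (simp add: scaleR_right.minus)

lemma linear_on_id: "linear_on A (\<lambda>x. x)"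
  unfolding linear_on_def by simp

lemma linear_on_compose_sum:
  "(\<And>i. i \<in> S \<Longrightarrow> linear_on A (f i)) \<Longrightarrow> linear_on A (\<lambda>x. \<Sum>i\<in>S. f i x)"
  unfolding linear_on_def by (simp add: sum.distrib scaleR_sum_right)

lemma linear_on_the_inv_into:
  assumes "linear_on A f" "bij_betw f A B" "subspace A"
  shows "linear_on B (the_inv_into A f)"
proof -
  have inv: "the_inv_into A f y \<in> A" "f (the_inv_into A f y) = y" if "y \<in> B" for y
    using bij_betwE[OF bij_betw_the_inv_into[OF assms(2)]] f_the_inv_into_f_bij_betw[OF assms(2)] that
    by auto
  have inv_eq: "the_inv_into A f y = x" if "x \<in> A" "y = f x" for x y
    using the_inv_into_f_f[OF bij_betw_imp_inj_on[OF assms(2)]] that by simp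
  show ?thesis
    unfolding linear_on_def
  proof (intro conjI ballI allI)
    fix x y assume "x \<in> B" "y \<in> B"
    then have "the_inv_into A f x + the_inv_into A f y \<in> A"
      and "x + y = f (the_inv_into A f x + the_inv_into A f y)"
      using inv linear_on_add[OF assms(1)] subspace_add[OF assms(3)] by auto
    then show "the_inv_into A f (x + y) = the_inv_into A f x + the_inv_into A f y"
      by (rule inv_eq)
  next
    fix c x assume "x \<in> B"
    then have "c *\<^sub>R the_inv_into A f x \<in> A" and "c *\<^sub>R x = f (c *\<^sub>R the_inv_into A f x)"
      using inv linear_on_scale[OF assms(1)] subspace_scale[OF assms(3)] by auto
    then show "the_inv_into A f (c *\<^sub>R x) = c *\<^sub>R the_inv_into A f x"
      by (rule inv_eq)
  qed
qed

lemma linear_on_image_span: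
  assumes "linear_on (span G) f"
  shows "f ` span G = span (f ` G)"
proof
  have "subspace (f ` span G)"
    unfolding subspace_def
  proof (intro conjI ballI allI)
    show "0 \<in> f ` span G" using linear_on_0[OF assms] span_zero by (metis image_eqI)
  next
    fix x y assume "x \<in> f ` span G" "y \<in> f ` span G"
    then obtain a b where "a \<in> span G" "b \<in> span G" "x = f a" "y = f b" by blast
    then show "x + y \<in> f ` span G" using linear_on_add[OF assms] span_add by (metis image_eqI)
  next
    fix c x assume "x \<in> f ` span G"
    then obtain a where "a \<in> span G" "x = f a" by blast
    then show "c *\<^sub>R x \<in> f ` span G" using linear_on_scale[OF assms] span_scale by (metis image_eqI)
  qed
  then show "span (f ` G) \<subseteq> f ` span G"
    by (intro span_minimal) (auto intro: span_base)
next
  have "subspace {x \<in> span G. f x \<in> span (f ` G)}"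
    unfolding subspace_def
  proof (intro conjI ballI allI)
    show "0 \<in> {x \<in> span G. f x \<in> span (f ` G)}"
      using linear_on_0[OF assms] by (simp add: span_zero)
  next
    fix x y assume "x \<in> {x \<in> span G. f x \<in> span (f ` G)}" "y \<in> {x \<in> span G. f x \<in> span (f ` G)}"
    then show "x + y \<in> {x \<in> span G. f x \<in> span (f ` G)}"
      using linear_on_add[OF assms, of x y] span_add[of "f x" "f ` G" "f y"] span_add[of x G y] by auto
  next
    fix c x assume "x \<in> {x \<in> span G. f x \<in> span (f ` G)}"
    then show "c *\<^sub>R x \<in> {x \<in> span G. f x \<in> span (f ` G)}"
      using linear_on_scale[OF assms, of x c] span_scale[of "f x" "f ` G" c] span_scale[of x G c] by auto
  qed
  then have "f x \<in> span (f ` G)" if "x \<in> span G" for x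
    using span_induct[OF that] by (auto intro: span_base)
  then show "f ` span G \<subseteq> span (f ` G)" by blast
qed

lemma orthogonal_basis_of_span:
  fixes B :: "'a::real_inner set"
  assumes "finite B"
  obtains Ob where "finite Ob" "pairwise orthogonal Ob" "0 \<notin> Ob" "span Ob = span B"
proof -
  obtain Ob where Ob: "finite Ob" "span Ob = span B" "pairwise orthogonal Ob"
    using basis_orthogonal[OF assms] by blast
  have "pairwise orthogonal (Ob - {0})" using Ob(3) by (auto simp: pairwise_def)
  then show ?thesis using that[of "Ob - {0}"] Ob by simp
qed

lemma orthogonal_expansion_residual:
  fixes Ob :: "'a::real_inner set"
  assumes "finite Ob" "pairwise orthogonal Ob" "0 \<notin> Ob" "w \<in> span Ob"
  shows "inner (x - (\<Sum>e\<in>Ob. (inner x e / inner e e) *\<^sub>R e)) w = 0"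
proof -
  have "orthogonal (x - (\<Sum>e\<in>Ob. (inner x e / inner e e) *\<^sub>R e)) e'" if "e' \<in> Ob" for e'
  proof -
    have "inner (\<Sum>e\<in>Ob. (inner x e / inner e e) *\<^sub>R e) e'
        = (\<Sum>e\<in>Ob. (inner x e / inner e e) * inner e e')"
      by (simp add: inner_sum_left)
    also have "\<dots> = (\<Sum>e\<in>Ob. if e = e' then inner x e' else 0)"
    proof (rule sum.cong[OF refl])
      fix e assume "e \<in> Ob"
      show "inner x e / inner e e * inner e e' = (if e = e' then inner x e' else 0)"
      proof (cases "e = e'")
        case True then show ?thesis using assms(3) \<open>e' \<in> Ob\<close> by auto
      next
        case False then show ?thesis using assms(2) \<open>e \<in> Ob\<close> \<open>e' \<in> Ob\<close>
          by (auto simp: pairwise_def orthogonal_def)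
      qed
    qed
    also have "\<dots> = inner x e'" using assms(1) that by simp
    finally show ?thesis by (simp add: orthogonal_def inner_diff_left)
  qed
  then show ?thesis
    using orthogonal_to_span[OF assms(4)] by (simp add: orthogonal_def)
qed

lemma orthogonal_expansion:
  fixes Ob :: "'a::real_inner set"
  assumes "finite Ob" "pairwise orthogonal Ob" "0 \<notin> Ob" "a \<in> span Ob"
  shows "a = (\<Sum>e\<in>Ob. (inner a e / inner e e) *\<^sub>R e)"
proof -
  let ?p = "\<Sum>e\<in>Ob. (inner a e / inner e e) *\<^sub>R e"
  have "?p \<in> span Ob" by (intro span_sum span_scale span_base)
  then have "a - ?p \<in> span Ob" using assms(4) span_diff by blast
  then have "inner (a - ?p) (a - ?p) = 0" using orthogonal_expansion_residual[OF assms(1-3)] by blast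
  then show ?thesis by simp
qed

lemma orthogonal_projection_exists:
  fixes B :: "'a::real_inner set"
  assumes "finite B"
  shows "\<exists>p\<in>span B. \<forall>w\<in>span B. inner (x - p) w = 0"
proof -
  obtain Ob where Ob: "finite Ob" "pairwise orthogonal Ob" "0 \<notin> Ob" "span Ob = span B"
    using orthogonal_basis_of_span[OF assms] by blast
  have "(\<Sum>e\<in>Ob. (inner x e / inner e e) *\<^sub>R e) \<in> span Ob"
    by (intro span_sum span_scale span_base)
  then show ?thesis using orthogonal_expansion_residual[OF Ob(1-3)] Ob(4) by blast
qed

lemma adjoint_exists:
  fixes f :: "'a::real_inner \<Rightarrow> 'b::real_inner"
  assumes "finite B" "linear_on (span B) f"
  shows "\<exists>z\<in>span B. \<forall>a\<in>span B. inner (f a) y = inner a z"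
proof -
  obtain Ob where Ob: "finite Ob" "pairwise orthogonal Ob" "0 \<notin> Ob" "span Ob = span B"
    using orthogonal_basis_of_span[OF assms(1)] by blast
  let ?z = "\<Sum>e\<in>Ob. (inner (f e) y / inner e e) *\<^sub>R e"
  have "inner (f a) y = inner a ?z" if "a \<in> span B" for a
  proof -
    have Ob_span: "e \<in> span B" if "e \<in> Ob" for e
      using that Ob(4) span_base by blast
    have "f a = f (\<Sum>e\<in>Ob. (inner a e / inner e e) *\<^sub>R e)"
      using orthogonal_expansion[OF Ob(1-3)] that Ob(4) by auto
    also have "\<dots> = (\<Sum>e\<in>Ob. f ((inner a e / inner e e) *\<^sub>R e))"
      using Ob_span by (intro linear_on_sum[OF assms(2)] subspace_span span_scale)
    also have "\<dots> = (\<Sum>e\<in>Ob. (inner a e / inner e e) *\<^sub>R f e)"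
      using Ob_span by (intro sum.cong refl linear_on_scale[OF assms(2)])
    finally have "inner (f a) y = (\<Sum>e\<in>Ob. (inner a e / inner e e) * inner (f e) y)"
      by (simp add: inner_sum_left)
    also have "\<dots> = inner a ?z"
      by (simp add: inner_sum_right mult.commute)
    finally show ?thesis .
  qed
  moreover have "?z \<in> span B"
    unfolding Ob(4)[symmetric] by (intro span_sum span_scale span_base)
  ultimately show ?thesis by blast
qed

lemma adj_span:
  fixes f :: "'a::real_inner \<Rightarrow> 'b::real_inner"
  assumes "finite B" "linear_on (span B) f"
  shows "adj (span B) f y \<in> span B"
    and "a \<in> span B \<Longrightarrow> inner (f a) y = inner a (adj (span B) f y)"
proof -
  obtain z where z: "z \<in> span B" "\<forall>a\<in>span B. inner (f a) y = inner a z"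
    using adjoint_exists[OF assms] by blast
  have "adj (span B) f y = z"
    unfolding adj_def
  proof (rule the_equality)
    fix z' assume z': "z' \<in> span B \<and> (\<forall>a\<in>span B. inner (f a) y = inner a z')"
    have "z' - z \<in> span B" using z z' span_diff by blast
    then have "inner (z' - z) z' = inner (z' - z) z" using z z' by metis
    then have "inner (z' - z) (z' - z) = 0" by (simp add: inner_diff_right)
    then show "z' = z" by simp
  qed (use z in auto)
  then show "adj (span B) f y \<in> span B" "a \<in> span B \<Longrightarrow> inner (f a) y = inner a (adj (span B) f y)"
    using z by auto
qed

lemma oproj_eqI:
  assumes "p \<in> W" "\<forall>w\<in>W. inner (x - p) w = 0"
    and "\<And>q. q \<in> W \<Longrightarrow> \<forall>w\<in>W. inner (x - q) w = 0 \<Longrightarrow> q = p"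
  shows "oproj W x = p"
  unfolding oproj_def
proof (rule the_equality)
  show "p \<in> W \<and> (\<forall>w\<in>W. inner (x - p) w = 0)" using assms(1,2) ..
qed (use assms(3) in blast)

lemma oproj_eq_0:
  assumes "0 \<in> W" "\<forall>w\<in>W. inner x w = 0"
  shows "oproj W x = 0"
proof (rule oproj_eqI)
  fix q assume "q \<in> W" "\<forall>w\<in>W. inner (x - q) w = 0"
  then have "inner (x - q) q = 0" "inner x q = 0" using assms by auto
  then show "q = 0" by (simp add: inner_diff_left)
qed (use assms in simp_all)

lemma image_orthogonal_ker_adj:
  assumes "finite G" "linear_on (span G) f" "a \<in> span G" "adj (span G) f w = 0"
  shows "inner (f a) w = 0"
  using adj_span(2)[OF assms(1-3)] assms(4) by simp

lemma adj_span_0: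
  assumes "finite G" "linear_on (span G) f"
  shows "adj (span G) f 0 = 0"
proof -
  have "inner (f (adj (span G) f 0)) 0 = inner (adj (span G) f 0) (adj (span G) f 0)"
    by (rule adj_span(2)[OF assms adj_span(1)[OF assms]])
  then show ?thesis by simp
qed

lemma image_ker_adj_decomposition:
  fixes f :: "'a::real_inner \<Rightarrow> 'b::real_inner"
  assumes G: "finite G" and f: "linear_on (span G) f"
    and W: "subspace W" "f ` span G \<subseteq> W" and y: "y \<in> W"
  obtains p where "p \<in> f ` span G" "y - p \<in> W" "adj (span G) f (y - p) = 0"
proof -
  let ?A = "adj (span G) f"
  have "f ` span G = span (f ` G)" by (rule linear_on_image_span[OF f])
  then obtain p where p: "p \<in> f ` span G" "\<forall>w\<in>f ` span G. inner (y - p) w = 0"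
    using orthogonal_projection_exists[of "f ` G" y] G by auto
  have "y - p \<in> W" using y p(1) W subspace_diff by blast
  have "inner (y - p) (f (?A (y - p))) = 0"
    using p(2) adj_span(1)[OF G f] by blast
  then have "inner (?A (y - p)) (?A (y - p)) = 0"
    using adj_span(2)[OF G f adj_span(1)[OF G f], of "y - p"] by (simp add: inner_commute)
  then show thesis using that p(1) \<open>y - p \<in> W\<close> by simp
qed

lemma oproj_ker_adj_eq_0_iff:
  fixes f :: "'a::real_inner \<Rightarrow> 'b::real_inner"
  assumes G: "finite G" and f: "linear_on (span G) f"
    and W: "subspace W" "f ` span G \<subseteq> W" and y: "y \<in> W"
  shows "oproj {x \<in> W. adj (span G) f x = 0} y = 0 \<longleftrightarrow> y \<in> f ` span G"
proof -
  let ?K = "{x \<in> W. adj (span G) f x = 0}"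
  have image_orth: "inner (f a) w = 0" if "a \<in> span G" "w \<in> ?K" for a w
    using image_orthogonal_ker_adj[OF G f] that by simp
  show ?thesis
  proof
    assume "y \<in> f ` span G"
    then show "oproj ?K y = 0"
      using image_orth adj_span_0[OF G f] subspace_0[OF W(1)] by (intro oproj_eq_0) auto
  next
    assume proj: "oproj ?K y = 0"
    obtain p where p: "p \<in> f ` span G" "y - p \<in> ?K"
      using image_ker_adj_decomposition[OF G f W y] by blast
    have "oproj ?K y = y - p"
    proof (rule oproj_eqI[OF p(2)])
      show "\<forall>w\<in>?K. inner (y - (y - p)) w = 0" using image_orth p(1) by auto
    next
      fix q assume q: "q \<in> ?K" "\<forall>w\<in>?K. inner (y - q) w = 0"
      have "inner (y - q) (y - p) = 0" "inner (y - q) q = 0" "inner p (y - p) = 0" "inner p q = 0"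
        using q p image_orth by auto
      then have "inner ((y - p) - q) ((y - p) - q) = 0"
        by (simp add: inner_diff_left inner_diff_right inner_commute)
      then show "q = y - p" by simp
    qed
    then show "y \<in> f ` span G" using proj p(1) by simp
  qed
qed

section \<open>Based chain complexes\<close>

lemma chains_subspace:
  assumes "\<And>\<alpha>. subspace (C \<alpha>)"
  shows "subspace (chains J C n)"
  unfolding subspace_def
proof (intro conjI ballI allI)
  show "0 \<in> chains J C n" unfolding chains_def
    by (rule CollectI, rule exI[of _ "\<lambda>_. 0"]) (simp add: subspace_0[OF assms])
next
  fix x y assume "x \<in> chains J C n" "y \<in> chains J C n"
  then obtain f g where "x = sum f (J n)" "\<forall>\<alpha>\<in>J n. f \<alpha> \<in> C \<alpha>" "y = sum g (J n)" "\<forall>\<alpha>\<in>J n. g \<alpha> \<in> C \<alpha>"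
    unfolding chains_def by blast
  then show "x + y \<in> chains J C n" unfolding chains_def
    by (intro CollectI exI[of _ "\<lambda>\<alpha>. f \<alpha> + g \<alpha>"]) (simp add: sum.distrib subspace_add[OF assms])
next
  fix c x assume "x \<in> chains J C n"
  then obtain f where "x = sum f (J n)" "\<forall>\<alpha>\<in>J n. f \<alpha> \<in> C \<alpha>"
    unfolding chains_def by blast
  then show "c *\<^sub>R x \<in> chains J C n" unfolding chains_def
    by (intro CollectI exI[of _ "\<lambda>\<alpha>. c *\<^sub>R f \<alpha>"]) (simp add: scaleR_sum_right subspace_scale[OF assms])
qed

lemma summand_subset_chains:
  assumes "\<And>\<alpha>. subspace (C \<alpha>)" "finite (J n)" "\<alpha> \<in> J n"
  shows "C \<alpha> \<subseteq> chains J C n"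
proof
  fix x assume "x \<in> C \<alpha>"
  then have "x = (\<Sum>\<beta>\<in>J n. if \<beta> = \<alpha> then x else 0)" "\<forall>\<beta>\<in>J n. (if \<beta> = \<alpha> then x else 0) \<in> C \<beta>"
    using assms subspace_0 by auto
  then show "x \<in> chains J C n" unfolding chains_def by blast
qed

lemma chains_finite_span:
  assumes "\<And>\<alpha>. \<exists>B. finite B \<and> C \<alpha> = span B" "finite (J n)"
  obtains G where "finite G" "chains J C n = span G"
proof -
  obtain B where B: "finite (B \<alpha>)" "C \<alpha> = span (B \<alpha>)" for \<alpha>
    using assms(1) by metis
  have sub: "subspace (C \<alpha>)" for \<alpha> using B(2) by simp
  let ?G = "\<Union>\<alpha>\<in>J n. B \<alpha>"
  have "chains J C n \<subseteq> span ?G"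
  proof
    fix x assume "x \<in> chains J C n"
    then obtain f where f: "x = sum f (J n)" "\<forall>\<alpha>\<in>J n. f \<alpha> \<in> C \<alpha>"
      unfolding chains_def by blast
    have "f \<alpha> \<in> span ?G" if "\<alpha> \<in> J n" for \<alpha>
      using f(2) that B(2) span_mono[of "B \<alpha>" ?G] by blast
    then show "x \<in> span ?G" unfolding f(1) by (intro span_sum)
  qed
  moreover have "?G \<subseteq> chains J C n"
    using summand_subset_chains[where C=C and J=J and n=n, OF sub assms(2)] B(2) span_base by blast
  then have "span ?G \<subseteq> chains J C n"
    by (rule span_minimal[OF _ chains_subspace[OF sub]])
  ultimately show ?thesis using that[of ?G] B(1) assms(2) by blast
qed

lemma blk_inv_eq_the_inv_into: "blk_inv I C d \<beta> \<alpha> = the_inv_into (C \<alpha>) (blk I C d \<beta> \<alpha>)"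
  by (simp add: fun_eq_iff blk_inv_def the_inv_into_def)

locale based_complex =
  fixes I :: "nat \<Rightarrow> 'c set" and C :: "'c \<Rightarrow> 'v::real_inner set" and d :: "'v \<Rightarrow> 'v"
  assumes complex: "fin_based_complex I C d"
begin

lemma finite_cells: "finite (I n)"
  and cells_disjoint: "n \<noteq> m \<Longrightarrow> I n \<inter> I m = {}"
  and summand_span: "\<exists>B. finite B \<and> C \<alpha> = span B"
  and direct_sum: "\<forall>\<alpha>\<in>I n. f \<alpha> \<in> C \<alpha> \<Longrightarrow> sum f (I n) = 0 \<Longrightarrow> \<alpha> \<in> I n \<Longrightarrow> f \<alpha> = 0"
  and linear_on_d: "linear_on (chains I C n) d"
  and d_chains: "x \<in> chains I C (Suc n) \<Longrightarrow> d x \<in> chains I C n"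
  and d_d: "x \<in> chains I C n \<Longrightarrow> d (d x) = 0"
  using complex by (simp_all add: fin_based_complex_def linear_on_def)

lemma level_unique: "\<alpha> \<in> I n \<Longrightarrow> \<alpha> \<in> I m \<Longrightarrow> n = m"
  using cells_disjoint[of n m] by auto

lemma deg_eq: "\<alpha> \<in> I n \<Longrightarrow> deg I \<alpha> = n"
  unfolding deg_def using level_unique by blast

lemma subspace_summand: "subspace (C \<alpha>)"
  using summand_span[of \<alpha>] subspace_span by metis

lemma subspace_chains: "subspace (chains I C n)"
  by (rule chains_subspace[OF subspace_summand])

lemma summand_in_chains: "\<alpha> \<in> I n \<Longrightarrow> x \<in> C \<alpha> \<Longrightarrow> x \<in> chains I C n"
  using summand_subset_chains[where C=C and J=I and n=n, OF subspace_summand finite_cells] by blast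

lemma chains_span: obtains G where "finite G" "chains I C n = span G"
  by (rule chains_finite_span[where J=I, OF summand_span finite_cells])

lemma mchains_span: obtains G where "finite G" "mchains I C M n = span G"
proof -
  have "finite (I n \<inter> unmatched M)" using finite_cells by simp
  then obtain G where "finite G" "chains (\<lambda>k. I k \<inter> unmatched M) C n = span G"
    by (rule chains_finite_span[where J="\<lambda>k. I k \<inter> unmatched M", OF summand_span])
  then show ?thesis using that by (simp add: mchains_def)
qed

lemma mchainsE:
  assumes "x \<in> mchains I C M n"
  obtains f where "\<forall>\<alpha>\<in>I n. f \<alpha> \<in> C \<alpha>" "\<forall>\<alpha>\<in>I n. \<alpha> \<notin> unmatched M \<longrightarrow> f \<alpha> = 0"
    "x = sum f (I n)"
proof -
  obtain g where g: "x = sum g (I n \<inter> unmatched M)" "\<forall>\<alpha>\<in>I n \<inter> unmatched M. g \<alpha> \<in> C \<alpha>"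
    using assms unfolding mchains_def chains_def by blast
  let ?f = "\<lambda>\<alpha>. if \<alpha> \<in> unmatched M then g \<alpha> else 0"
  have "x = sum ?f (I n)" unfolding g(1) using finite_cells by (simp add: sum.If_cases Int_commute)
  moreover have "\<forall>\<alpha>\<in>I n. ?f \<alpha> \<in> C \<alpha>" using g(2) subspace_0[OF subspace_summand] by auto
  ultimately show ?thesis using that by auto
qed

lemma mchains_subset_chains: "mchains I C M n \<subseteq> chains I C n"
proof
  fix x assume "x \<in> mchains I C M n"
  then obtain f where "\<forall>\<alpha>\<in>I n. f \<alpha> \<in> C \<alpha>" "x = sum f (I n)"
    by (rule mchainsE)
  then show "x \<in> chains I C n" unfolding chains_def by blast
qed

lemma comp_sum:
  assumes "\<forall>\<gamma>\<in>I n. f \<gamma> \<in> C \<gamma>"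
  shows "comp I C n \<beta> (sum f (I n)) = (if \<beta> \<in> I n then f \<beta> else 0)"
proof -
  let ?g = "\<lambda>\<gamma>. if \<gamma> \<in> I n then f \<gamma> else 0"
  have "(THE g. (\<forall>\<gamma>\<in>I n. g \<gamma> \<in> C \<gamma>) \<and> (\<forall>\<gamma>. \<gamma> \<notin> I n \<longrightarrow> g \<gamma> = 0) \<and> sum g (I n) = sum f (I n)) = ?g"
  proof (rule the_equality)
    fix g assume g: "(\<forall>\<gamma>\<in>I n. g \<gamma> \<in> C \<gamma>) \<and> (\<forall>\<gamma>. \<gamma> \<notin> I n \<longrightarrow> g \<gamma> = 0) \<and> sum g (I n) = sum f (I n)"
    have "g \<gamma> - f \<gamma> = 0" if "\<gamma> \<in> I n" for \<gamma>
    proof (rule direct_sum[of n "\<lambda>\<gamma>. g \<gamma> - f \<gamma>"])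
      show "\<forall>\<alpha>\<in>I n. g \<alpha> - f \<alpha> \<in> C \<alpha>" using g assms subspace_diff[OF subspace_summand] by blast
      show "(\<Sum>\<alpha>\<in>I n. g \<alpha> - f \<alpha>) = 0" using g by (simp add: sum_subtractf)
    qed fact
    then show "g = ?g" using g by (auto simp: fun_eq_iff)
  qed (use assms in simp)
  then show ?thesis unfolding comp_def by simp
qed

lemma comp_in: "x \<in> chains I C n \<Longrightarrow> comp I C n \<beta> x \<in> C \<beta>"
  by (auto simp: chains_def comp_sum subspace_0[OF subspace_summand])

lemma sum_comp: "x \<in> chains I C n \<Longrightarrow> (\<Sum>\<beta>\<in>I n. comp I C n \<beta> x) = x"
  by (auto simp: chains_def comp_sum)

lemma comp_summand: "\<alpha> \<in> I n \<Longrightarrow> x \<in> C \<alpha> \<Longrightarrow> comp I C n \<beta> x = (if \<beta> = \<alpha> then x else 0)"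
  using comp_sum[of n "\<lambda>\<gamma>. if \<gamma> = \<alpha> then x else 0" \<beta>] finite_cells subspace_0[OF subspace_summand]
  by auto

lemma linear_on_comp: "linear_on (chains I C n) (comp I C n \<beta>)"
  unfolding linear_on_def
proof (intro conjI ballI allI)
  fix x y assume "x \<in> chains I C n" "y \<in> chains I C n"
  then obtain f g where f: "\<forall>\<gamma>\<in>I n. f \<gamma> \<in> C \<gamma>" "x = sum f (I n)"
    and g: "\<forall>\<gamma>\<in>I n. g \<gamma> \<in> C \<gamma>" "y = sum g (I n)"
    unfolding chains_def by blast
  have "x + y = (\<Sum>\<gamma>\<in>I n. f \<gamma> + g \<gamma>)" "\<forall>\<gamma>\<in>I n. f \<gamma> + g \<gamma> \<in> C \<gamma>"
    using f g subspace_add[OF subspace_summand] by (auto simp: sum.distrib)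
  then show "comp I C n \<beta> (x + y) = comp I C n \<beta> x + comp I C n \<beta> y"
    using f g by (simp add: comp_sum)
next
  fix c x assume "x \<in> chains I C n"
  then obtain f where f: "\<forall>\<gamma>\<in>I n. f \<gamma> \<in> C \<gamma>" "x = sum f (I n)"
    unfolding chains_def by blast
  have "c *\<^sub>R x = (\<Sum>\<gamma>\<in>I n. c *\<^sub>R f \<gamma>)" "\<forall>\<gamma>\<in>I n. c *\<^sub>R f \<gamma> \<in> C \<gamma>"
    using f subspace_scale[OF subspace_summand] by (auto simp: scaleR_sum_right)
  then show "comp I C n \<beta> (c *\<^sub>R x) = c *\<^sub>R comp I C n \<beta> x"
    using f by (simp add: comp_sum)
qed

lemma blk_eq: "\<beta> \<in> I k \<Longrightarrow> blk I C d \<beta> \<alpha> x = comp I C k \<beta> (d x)"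
  unfolding blk_def by (simp add: deg_eq)

lemma blk_in: "\<alpha> \<in> I (Suc k) \<Longrightarrow> \<beta> \<in> I k \<Longrightarrow> x \<in> C \<alpha> \<Longrightarrow> blk I C d \<beta> \<alpha> x \<in> C \<beta>"
  by (simp add: blk_eq comp_in d_chains summand_in_chains)

lemma linear_on_blk:
  assumes "\<alpha> \<in> I (Suc k)" "\<beta> \<in> I k"
  shows "linear_on (C \<alpha>) (blk I C d \<beta> \<alpha>)"
proof -
  have "linear_on (C \<alpha>) d"
    using linear_on_subset[OF linear_on_d] summand_in_chains[OF assms(1)] by blast
  moreover have "d ` C \<alpha> \<subseteq> chains I C k"
    using d_chains summand_in_chains[OF assms(1)] by blast
  ultimately have "linear_on (C \<alpha>) (\<lambda>x. comp I C k \<beta> (d x))"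
    by (rule linear_on_compose[OF _ _ linear_on_comp])
  moreover have "blk I C d \<beta> \<alpha> = (\<lambda>x. comp I C k \<beta> (d x))"
    using blk_eq[OF assms(2)] by (simp add: fun_eq_iff)
  ultimately show ?thesis by simp
qed

lemma blk_eq_0_if_not_edge:
  "(\<alpha>, \<beta>) \<notin> edges I C d \<Longrightarrow> \<alpha> \<in> I (Suc k) \<Longrightarrow> \<beta> \<in> I k \<Longrightarrow> x \<in> C \<alpha> \<Longrightarrow> blk I C d \<beta> \<alpha> x = 0"
  unfolding edges_def by blast

lemma edges_levels: "(\<alpha>, \<beta>) \<in> edges I C d \<Longrightarrow> \<exists>k. \<alpha> \<in> I (Suc k) \<and> \<beta> \<in> I k"
  unfolding edges_def by blast

end

section \<open>Gradient paths of a Morse matching\<close>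

lemma sum_eq_single:
  assumes "finite A" "a \<in> A" "\<And>x. x \<in> A \<Longrightarrow> x \<noteq> a \<Longrightarrow> f x = 0"
  shows "sum f A = f a"
  using sum.mono_neutral_left[of A "{a}" f] assms by auto

lemma successively_rtrancl:
  "successively (\<lambda>a b. (a, b) \<in> R) p \<Longrightarrow> x \<in> set p \<Longrightarrow> (hd p, x) \<in> R\<^sup>*"
proof (induction p)
  case (Cons a q)
  then show ?case
    by (cases q) (auto simp: successively_Cons intro: converse_rtrancl_into_rtrancl)
qed simp

lemma successively_distinct:
  assumes "acyclic R" "successively (\<lambda>a b. (a, b) \<in> R) p"
  shows "distinct p"
  using assms(2)
proof (induction p)
  case (Cons a q)
  show ?case
  proof (cases q)
    case (Cons b r)
    have "(a, b) \<in> R" "successively (\<lambda>a b. (a, b) \<in> R) q"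
      using Cons.prems Cons by auto
    moreover have "a \<notin> set q"
    proof
      assume "a \<in> set q"
      then have "(b, a) \<in> R\<^sup>*" using successively_rtrancl[OF \<open>successively _ q\<close>] Cons by force
      then show False using \<open>(a, b) \<in> R\<close> assms(1) by (meson acyclic_def rtrancl_into_trancl2)
    qed
    ultimately show ?thesis using Cons.IH by simp
  qed simp
qed simp

lemma pidx_Cons: "q \<noteq> [] \<Longrightarrow> pidx st (a # q) x = pidx st q (st a (hd q) x)"
  by (cases q) auto

lemma pidx_snoc: "q \<noteq> [] \<Longrightarrow> pidx st (q @ [b]) x = st (last q) b (pidx st q x)"
proof (induction q arbitrary: x)
  case (Cons a q)
  then show ?case by (cases q) auto
qed simp

locale morse_complex = based_complex +
  fixes M :: "('c \<times> 'c) set"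
  assumes matching: "morse_matching I C d M"
begin

abbreviation "E \<equiv> medges I C d M"
abbreviation "\<Gamma> \<equiv> Gamma I C d M"
abbreviation "U \<equiv> unmatched M"

lemma matched_edges: "M \<subseteq> edges I C d"
  and matched_bij: "(\<alpha>, \<beta>) \<in> M \<Longrightarrow> bij_betw (blk I C d \<beta> \<alpha>) (C \<alpha>) (C \<beta>)"
  and matched_disjoint: "e \<in> M \<Longrightarrow> e' \<in> M \<Longrightarrow> e \<noteq> e' \<Longrightarrow> {fst e, snd e} \<inter> {fst e', snd e'} = {}"
  and level_order: "partial_order_on (I n) {(\<alpha>, \<beta>). \<alpha> \<in> I n \<and> \<beta> \<in> I n \<and> mpaths I C d M \<alpha> \<beta> \<noteq> {}}"
  using matching unfolding morse_matching_def by auto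

lemma matched_levels: "(\<alpha>, \<beta>) \<in> M \<Longrightarrow> \<exists>k. \<alpha> \<in> I (Suc k) \<and> \<beta> \<in> I k"
  using matched_edges edges_levels by blast

lemma matched_unique_lower: "(\<alpha>, \<beta>) \<in> M \<Longrightarrow> (\<alpha>, \<beta>') \<in> M \<Longrightarrow> \<beta> = \<beta>'"
  using matched_disjoint[of "(\<alpha>, \<beta>)" "(\<alpha>, \<beta>')"] by auto

lemma matched_unique_upper: "(\<alpha>, \<beta>) \<in> M \<Longrightarrow> (\<alpha>', \<beta>) \<in> M \<Longrightarrow> \<alpha> = \<alpha>'"
  using matched_disjoint[of "(\<alpha>, \<beta>)" "(\<alpha>', \<beta>)"] by auto

lemma matched_distinct: "(\<alpha>, \<beta>) \<in> M \<Longrightarrow> \<alpha> \<noteq> \<beta>"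
proof
  assume "(\<alpha>, \<beta>) \<in> M" "\<alpha> = \<beta>"
  then obtain k where "\<alpha> \<in> I (Suc k)" "\<alpha> \<in> I k" using matched_levels by blast
  then show False using level_unique[of \<alpha> "Suc k" k] by simp
qed

lemma Domain_Range_disjoint: "\<beta> \<in> Range M \<Longrightarrow> \<beta> \<notin> Domain M"
proof
  assume "\<beta> \<in> Range M" "\<beta> \<in> Domain M"
  then obtain \<alpha> \<gamma> where M: "(\<alpha>, \<beta>) \<in> M" "(\<beta>, \<gamma>) \<in> M" by blast
  then have "(\<alpha>, \<beta>) \<noteq> (\<beta>, \<gamma>)" using matched_distinct by simp
  then show False using matched_disjoint[OF M] by simp
qed

lemma unmatched_iff: "\<alpha> \<in> U \<longleftrightarrow> \<alpha> \<notin> Domain M \<and> \<alpha> \<notin> Range M"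
  unfolding unmatched_def by simp

lemma medgesE:
  assumes "(a, b) \<in> E"
  obtains (down) k where "a \<in> I (Suc k)" "b \<in> I k" "(a, b) \<in> edges I C d" "(a, b) \<notin> M"
    | (up) k where "b \<in> I (Suc k)" "a \<in> I k" "(b, a) \<in> M"
proof -
  consider "(a, b) \<in> edges I C d" "(a, b) \<notin> M" | "(b, a) \<in> M"
    using assms unfolding medges_def by blast
  then show thesis
  proof cases
    case 1
    then show thesis using edges_levels down by blast
  next
    case 2
    then show thesis using matched_levels up by blast
  qed
qed

lemma mstep_down: "(b, a) \<notin> M \<Longrightarrow> mstep I C d M a b = blk I C d b a"
  by (simp add: fun_eq_iff mstep_def)

lemma mstep_up: "(b, a) \<in> M \<Longrightarrow> mstep I C d M a b = (\<lambda>x. - the_inv_into (C b) (blk I C d a b) x)"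
  by (simp add: fun_eq_iff mstep_def blk_inv_eq_the_inv_into)

lemma mstep_linear:
  assumes "(a, b) \<in> E"
  shows "linear_on (C a) (mstep I C d M a b) \<and> mstep I C d M a b ` C a \<subseteq> C b"
  using assms
proof (cases rule: medgesE)
  case (down k)
  have "(b, a) \<notin> M"
  proof
    assume "(b, a) \<in> M"
    then obtain k' where "b \<in> I (Suc k')" "a \<in> I k'" using matched_levels by blast
    then show False using down(1,2) level_unique[of a k' "Suc k"] level_unique[of b "Suc k'" k] by simp
  qed
  then show ?thesis
    unfolding mstep_down[OF \<open>(b, a) \<notin> M\<close>]
    using linear_on_blk[OF down(1,2)] blk_in[OF down(1,2)] by blast
next
  case (up k)
  let ?g = "the_inv_into (C b) (blk I C d a b)"
  have "linear_on (C a) ?g"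
    by (rule linear_on_the_inv_into[OF linear_on_blk[OF up(1,2)] matched_bij[OF up(3)] subspace_summand])
  moreover have "?g ` C a \<subseteq> C b"
    using bij_betwE[OF bij_betw_the_inv_into[OF matched_bij[OF up(3)]]] by blast
  ultimately show ?thesis
    unfolding mstep_up[OF up(3)]
    using linear_on_compose_neg subspace_neg[OF subspace_summand] by blast
qed

lemma mpaths_eq:
  "mpaths I C d M \<alpha> \<beta> = {p. p \<noteq> [] \<and> hd p = \<alpha> \<and> last p = \<beta> \<and> successively (\<lambda>a b. (a, b) \<in> E) p}"
  by (simp add: mpaths_def successively_conv_nth)

lemma pidx_linear:
  assumes "successively (\<lambda>a b. (a, b) \<in> E) p" "p \<noteq> []"
  shows "linear_on (C (hd p)) (pidx (mstep I C d M) p) \<and> pidx (mstep I C d M) p ` C (hd p) \<subseteq> C (last p)"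
  using assms
proof (induction p)
  case (Cons a q)
  show ?case
  proof (cases "q = []")
    case False
    let ?st = "mstep I C d M a (hd q)"
    have "(a, hd q) \<in> E" "successively (\<lambda>a b. (a, b) \<in> E) q"
      using Cons.prems False by (auto simp: successively_Cons)
    then have st: "linear_on (C a) ?st" "?st ` C a \<subseteq> C (hd q)"
      and IH: "linear_on (C (hd q)) (pidx (mstep I C d M) q)"
        "pidx (mstep I C d M) q ` C (hd q) \<subseteq> C (last q)"
      using mstep_linear Cons.IH False by blast+
    have "linear_on (C a) (\<lambda>x. pidx (mstep I C d M) q (?st x))"
      by (rule linear_on_compose[OF st IH(1)])
    moreover have "(\<lambda>x. pidx (mstep I C d M) q (?st x)) ` C a \<subseteq> C (last q)"
      using st(2) IH(2) by blast
    moreover have "pidx (mstep I C d M) (a # q) = (\<lambda>x. pidx (mstep I C d M) q (?st x))"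
      using False by (simp add: fun_eq_iff pidx_Cons)
    ultimately show ?thesis using False by simp
  qed (simp add: linear_on_id)
qed simp

lemma pidx_in: "q \<in> mpaths I C d M \<alpha> \<delta> \<Longrightarrow> x \<in> C \<alpha> \<Longrightarrow> pidx (mstep I C d M) q x \<in> C \<delta>"
  using pidx_linear unfolding mpaths_eq by blast

lemma Gamma_in: "x \<in> C \<alpha> \<Longrightarrow> \<Gamma> \<beta> \<alpha> x \<in> C \<beta>"
  unfolding Gamma_def using pidx_in by (intro subspace_sum[OF subspace_summand])

lemma linear_on_Gamma: "linear_on (C \<alpha>) (\<Gamma> \<beta> \<alpha>)"
  unfolding Gamma_def[abs_def] mpaths_eq
  by (intro linear_on_compose_sum) (use pidx_linear in auto)

lemma Gamma_0: "\<Gamma> \<beta> \<alpha> 0 = 0"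
  using linear_on_0[OF linear_on_Gamma subspace_0[OF subspace_summand]] .

lemma Gamma_neg: "x \<in> C \<alpha> \<Longrightarrow> \<Gamma> \<beta> \<alpha> (- x) = - \<Gamma> \<beta> \<alpha> x"
  using linear_on_neg[OF linear_on_Gamma] .

lemma mpaths_nonempty_iff: "mpaths I C d M \<alpha> \<beta> \<noteq> {} \<longleftrightarrow> (\<alpha>, \<beta>) \<in> E\<^sup>*"
proof
  assume "mpaths I C d M \<alpha> \<beta> \<noteq> {}"
  then obtain p where "p \<noteq> []" "hd p = \<alpha>" "last p = \<beta>" "successively (\<lambda>a b. (a, b) \<in> E) p"
    unfolding mpaths_eq by blast
  moreover have "\<beta> \<in> set p" using \<open>p \<noteq> []\<close> \<open>last p = \<beta>\<close> last_in_set by blast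
  ultimately show "(\<alpha>, \<beta>) \<in> E\<^sup>*" using successively_rtrancl[of E p \<beta>] by simp
next
  assume "(\<alpha>, \<beta>) \<in> E\<^sup>*"
  then show "mpaths I C d M \<alpha> \<beta> \<noteq> {}"
  proof (induction rule: converse_rtrancl_induct)
    case base
    have "[\<beta>] \<in> mpaths I C d M \<beta> \<beta>" by (simp add: mpaths_eq)
    then show ?case by blast
  next
    case (step a b)
    then obtain p where "p \<in> mpaths I C d M b \<beta>" by blast
    then have "a # p \<in> mpaths I C d M a \<beta>" using step(1) by (auto simp: mpaths_eq successively_Cons)
    then show ?case by blast
  qed
qed

lemma Gamma_eq_0_if_unreachable:
  assumes "(\<alpha>, \<beta>) \<notin> E\<^sup>*"
  shows "\<Gamma> \<beta> \<alpha> x = 0"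
proof -
  have "mpaths I C d M \<alpha> \<beta> = {}" using assms mpaths_nonempty_iff by blast
  then show ?thesis by (simp add: Gamma_def)
qed

lemma reachable_level:
  assumes "(a, b) \<in> E\<^sup>*" "a \<in> I j"
  shows "\<exists>k. b \<in> I k \<and> (k \<le> j \<or> k = Suc j \<and> b \<in> Domain M)"
  using assms(1)
proof (induction rule: rtrancl_induct)
  case (step b c)
  then obtain k where k: "b \<in> I k" "k \<le> j \<or> k = Suc j \<and> b \<in> Domain M" by blast
  from step(2) show ?case
  proof (cases rule: medgesE)
    case (down k')
    then have "k = Suc k'" using k(1) level_unique by blast
    then show ?thesis using k(2) down(2) by auto
  next
    case (up k')
    then have "k' = k" "b \<in> Range M" "c \<in> Domain M" using k(1) level_unique by blast+
    then have "Suc k' \<le> j \<or> Suc k' = Suc j" using k(2) Domain_Range_disjoint by auto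
    then show ?thesis using up(1) \<open>c \<in> Domain M\<close> by blast
  qed
qed (use assms(2) in blast)

lemma unreachable_two_levels_up:
  assumes "\<alpha> \<in> I j" "\<rho> \<in> I (Suc (Suc j))"
  shows "(\<alpha>, \<rho>) \<notin> E\<^sup>*"
proof
  assume "(\<alpha>, \<rho>) \<in> E\<^sup>*"
  then obtain k where "\<rho> \<in> I k" "k \<le> Suc j" using reachable_level[OF _ assms(1)] by fastforce
  then show False using assms(2) level_unique by fastforce
qed

lemma unreachable_level_up_from_unmatched:
  assumes "\<gamma> \<in> I j" "\<gamma> \<notin> Range M" "\<rho> \<in> I (Suc j)"
  shows "(\<gamma>, \<rho>) \<notin> E\<^sup>*"
proof
  assume "(\<gamma>, \<rho>) \<in> E\<^sup>*"
  then have "\<exists>k. \<rho> \<in> I k \<and> (k < j \<or> k = j \<and> \<rho> \<notin> Range M)"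
  proof (induction rule: rtrancl_induct)
    case (step b c)
    then obtain k where k: "b \<in> I k" "k < j \<or> k = j \<and> b \<notin> Range M" by blast
    from step(2) show ?case
    proof (cases rule: medgesE)
      case (down k')
      then have "k = Suc k'" using k(1) level_unique by blast
      then show ?thesis using k(2) down(2) by auto
    next
      case (up k')
      then have "k' = k" "b \<in> Range M" "c \<notin> Range M"
        using k(1) level_unique Domain_Range_disjoint by blast+
      then show ?thesis using k(2) up(1) by auto
    qed
  qed (use assms(1,2) in blast)
  then obtain k where "\<rho> \<in> I k" "k \<le> j" by auto
  then show False using assms(3) level_unique by fastforce
qed

lemma unreachable_if_nfree:
  assumes "nfree I M n" "\<alpha> \<in> I j" "j < n" "\<rho> \<in> I n"
  shows "(\<alpha>, \<rho>) \<notin> E\<^sup>*"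
proof
  assume "(\<alpha>, \<rho>) \<in> E\<^sup>*"
  then have "\<exists>k. \<rho> \<in> I k \<and> k < n"
  proof (induction rule: rtrancl_induct)
    case (step b c)
    then obtain k where k: "b \<in> I k" "k < n" by blast
    from step(2) show ?case
    proof (cases rule: medgesE)
      case (down k')
      then have "k = Suc k'" using k(1) level_unique by blast
      then show ?thesis using k(2) down(2) by auto
    next
      case (up k')
      then have "k' = k" using k(1) level_unique by blast
      moreover have "Suc k' \<noteq> n" using assms(1) up unfolding nfree_def by blast
      ultimately show ?thesis using k(2) up(1) by auto
    qed
  qed (use assms(2,3) in blast)
  then obtain k where "\<rho> \<in> I k" "k < n" by blast
  then show False using assms(4) level_unique by fastforce
qed


lemma level_antisym:
  assumes "\<alpha> \<in> I n" "\<beta> \<in> I n" "(\<alpha>, \<beta>) \<in> E\<^sup>*" "(\<beta>, \<alpha>) \<in> E\<^sup>*"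
  shows "\<alpha> = \<beta>"
proof -
  have "antisym {(\<alpha>, \<beta>). \<alpha> \<in> I n \<and> \<beta> \<in> I n \<and> mpaths I C d M \<alpha> \<beta> \<noteq> {}}"
    using level_order[of n] unfolding partial_order_on_def by (rule conjunct2)
  then show ?thesis
    by (rule antisymD) (use assms mpaths_nonempty_iff in auto)
qed

text \<open>Otherwise the cycle enters \<open>v\<close> by a reversed matched edge from some \<open>w\<close> and leaves it
  by an ordinary edge to some \<open>u \<noteq> w\<close>; then \<open>u\<close> and \<open>w\<close> are distinct cells of one level that
  are reachable from each other, contradicting the partial order on that level.\<close>

lemma cycle_climbs:
  assumes "(v, v) \<in> E\<^sup>+" "v \<in> I L"
  obtains x where "(v, x) \<in> E\<^sup>*" "(x, v) \<in> E\<^sup>*" "x \<in> I (Suc L)"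
proof -
  obtain u where vu: "(v, u) \<in> E" "(u, v) \<in> E\<^sup>*" using tranclD[OF assms(1)] by blast
  obtain w where wv: "(v, w) \<in> E\<^sup>*" "(w, v) \<in> E" using tranclD2[OF assms(1)] by blast
  show thesis
  proof (cases "u \<in> I (Suc L) \<or> w \<in> I (Suc L)")
    case True
    then show thesis using that vu wv by blast
  next
    case False
    have "\<exists>k. v \<in> I (Suc k) \<and> w \<in> I k \<and> (v, w) \<in> M"
      using wv(2)
    proof (cases rule: medgesE)
      case (down k)
      then show ?thesis using False assms(2) level_unique by blast
    qed blast
    then obtain k where k: "v \<in> I (Suc k)" "w \<in> I k" "(v, w) \<in> M" by blast
    from vu(1) have "u \<in> I k \<and> (v, u) \<notin> M"
    proof (cases rule: medgesE)
      case (down k')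
      then show ?thesis using k(1) level_unique by blast
    next
      case (up k')
      then show ?thesis using False assms(2) k(1) level_unique by blast
    qed
    then have u: "u \<in> I k" "(v, u) \<notin> M" by blast+
    have "(u, w) \<in> E\<^sup>*" using vu(2) wv(1) by (rule rtrancl_trans)
    moreover have "(w, u) \<in> E\<^sup>*"
      using converse_rtrancl_into_rtrancl[OF wv(2) r_into_rtrancl[OF vu(1)]] .
    ultimately have "u = w" by (rule level_antisym[OF u(1) k(2)])
    then show thesis using u(2) k(3) by simp
  qed
qed

text \<open>A cell of maximal level in the strongly connected component of a cycle contradicts
  \<open>cycle_climbs\<close>.\<close>

lemma acyclic_medges: "acyclic E"
proof (rule acyclicI, intro allI notI)
  fix a assume cycle: "(a, a) \<in> E\<^sup>+"
  define S where "S = {x. (a, x) \<in> E\<^sup>* \<and> (x, a) \<in> E\<^sup>*}"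
  obtain b where "(a, b) \<in> E" using tranclD[OF cycle] by blast
  then obtain j where j: "a \<in> I j" by (cases rule: medgesE) blast+
  have level: "x \<in> I (deg I x) \<and> deg I x \<le> Suc j" if "x \<in> S" for x
  proof -
    have "(a, x) \<in> E\<^sup>*" using that by (simp add: S_def)
    then obtain k where k: "x \<in> I k" "k \<le> j \<or> k = Suc j \<and> x \<in> Domain M"
      using reachable_level[OF _ j] by blast
    then have "k \<le> Suc j" by linarith
    then show ?thesis using deg_eq[OF k(1)] k(1) by simp
  qed
  have "deg I ` S \<subseteq> {..Suc j}" using level by (simp add: image_subset_iff)
  then have fin: "finite (deg I ` S)" by (rule finite_subset) simp
  have "a \<in> S" by (simp add: S_def)
  then have "Max (deg I ` S) \<in> deg I ` S" using Max_in[OF fin] by blast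
  then obtain v where v: "v \<in> S" "Max (deg I ` S) = deg I v" by (rule imageE)
  have va: "(v, a) \<in> E\<^sup>*" and av: "(a, v) \<in> E\<^sup>*" using v(1) by (simp_all add: S_def)
  have "(v, v) \<in> E\<^sup>+"
    by (rule trancl_rtrancl_trancl[OF rtrancl_trancl_trancl[OF va cycle] av])
  then obtain x where x: "(v, x) \<in> E\<^sup>*" "(x, v) \<in> E\<^sup>*" "x \<in> I (Suc (deg I v))"
    using cycle_climbs level[OF v(1)] by blast
  have "x \<in> S" unfolding S_def using rtrancl_trans[OF av x(1)] rtrancl_trans[OF x(2) va] by blast
  then have "deg I x \<le> deg I v" using Max_ge[OF fin] v(2) by (metis imageI)
  then show False using deg_eq[OF x(3)] by simp
qed

lemma finite_reachable: "finite {b. (a, b) \<in> E\<^sup>*}"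
proof (cases "\<exists>j. a \<in> I j")
  case True
  then obtain j where "a \<in> I j" by blast
  then have "{b. (a, b) \<in> E\<^sup>*} \<subseteq> (\<Union>k\<le>Suc j. I k)"
    using reachable_level by fastforce
  then show ?thesis by (rule finite_subset) (simp add: finite_cells)
next
  case False
  have "b = a" if "(a, b) \<in> E\<^sup>*" for b
    using that
  proof (cases rule: converse_rtranclE)
    case (step c)
    then show ?thesis using False by (cases rule: medgesE) blast+
  qed simp
  then have "{b. (a, b) \<in> E\<^sup>*} \<subseteq> {a}" by blast
  then show ?thesis by (rule finite_subset) simp
qed

lemma finite_mpaths: "finite (mpaths I C d M \<alpha> \<beta>)"
proof (rule finite_subset)
  show "mpaths I C d M \<alpha> \<beta> \<subseteq> {p. set p \<subseteq> {b. (\<alpha>, b) \<in> E\<^sup>*} \<and> distinct p}"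
  proof
    fix p assume "p \<in> mpaths I C d M \<alpha> \<beta>"
    then have p: "hd p = \<alpha>" "successively (\<lambda>a b. (a, b) \<in> E) p" by (simp_all add: mpaths_eq)
    then have "set p \<subseteq> {b. (\<alpha>, b) \<in> E\<^sup>*}" using successively_rtrancl[OF p(2)] p(1) by blast
    moreover have "distinct p" using successively_distinct[OF acyclic_medges p(2)] .
    ultimately show "p \<in> {p. set p \<subseteq> {b. (\<alpha>, b) \<in> E\<^sup>*} \<and> distinct p}" by blast
  qed
  show "finite {p. set p \<subseteq> {b. (\<alpha>, b) \<in> E\<^sup>*} \<and> distinct p}"
    by (rule finite_subset_distinct[OF finite_reachable])
qed

lemma finite_out_neighbours: "finite {\<nu>. (\<alpha>, \<nu>) \<in> E}"
  using finite_reachable[of \<alpha>] by (rule finite_subset[rotated]) auto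

lemma finite_in_neighbours: "finite {\<delta>. (\<delta>, \<beta>) \<in> E}"
proof (rule finite_subset)
  show "{\<delta>. (\<delta>, \<beta>) \<in> E} \<subseteq> I (Suc (deg I \<beta>)) \<union> I (deg I \<beta> - 1)"
  proof
    fix \<delta> assume "\<delta> \<in> {\<delta>. (\<delta>, \<beta>) \<in> E}"
    then have "(\<delta>, \<beta>) \<in> E" by simp
    then show "\<delta> \<in> I (Suc (deg I \<beta>)) \<union> I (deg I \<beta> - 1)"
      by (cases rule: medgesE) (auto simp: deg_eq)
  qed
qed (simp add: finite_cells)

lemma mpaths_snoc_decomp:
  "mpaths I C d M \<alpha> \<beta> = (if \<alpha> = \<beta> then {[\<alpha>]} else {}) \<union>
     (\<Union>\<delta>\<in>{\<delta>. (\<delta>, \<beta>) \<in> E}. (\<lambda>q. q @ [\<beta>]) ` mpaths I C d M \<alpha> \<delta>)"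
proof (intro set_eqI iffI)
  fix p assume "p \<in> mpaths I C d M \<alpha> \<beta>"
  then have p: "p \<noteq> []" "hd p = \<alpha>" "last p = \<beta>" "successively (\<lambda>a b. (a, b) \<in> E) p"
    by (simp_all add: mpaths_eq)
  have pq: "p = butlast p @ [\<beta>]" using p(1,3) append_butlast_last_id by metis
  show "p \<in> (if \<alpha> = \<beta> then {[\<alpha>]} else {}) \<union>
     (\<Union>\<delta>\<in>{\<delta>. (\<delta>, \<beta>) \<in> E}. (\<lambda>q. q @ [\<beta>]) ` mpaths I C d M \<alpha> \<delta>)"
  proof (cases "butlast p = []")
    case True
    then show ?thesis using pq p(2) by (simp del: append_butlast_last_id)
  next
    case False
    then have "successively (\<lambda>a b. (a, b) \<in> E) (butlast p)" "(last (butlast p), \<beta>) \<in> E"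
      "hd (butlast p) = \<alpha>"
      using p(2,4) pq successively_append_iff[of _ "butlast p" "[\<beta>]"] hd_append2[OF False, of "[\<beta>]"]
      by simp_all
    then have "butlast p \<in> mpaths I C d M \<alpha> (last (butlast p))" using False by (simp add: mpaths_eq)
    then show ?thesis using pq \<open>(last (butlast p), \<beta>) \<in> E\<close> by blast
  qed
next
  fix p assume "p \<in> (if \<alpha> = \<beta> then {[\<alpha>]} else {}) \<union>
     (\<Union>\<delta>\<in>{\<delta>. (\<delta>, \<beta>) \<in> E}. (\<lambda>q. q @ [\<beta>]) ` mpaths I C d M \<alpha> \<delta>)"
  then show "p \<in> mpaths I C d M \<alpha> \<beta>"
    by (auto simp: mpaths_eq successively_append_iff split: if_splits)
qed

lemma mpaths_Cons_decomp:
  "mpaths I C d M \<alpha> \<beta> = (if \<alpha> = \<beta> then {[\<alpha>]} else {}) \<union>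
     (\<Union>\<nu>\<in>{\<nu>. (\<alpha>, \<nu>) \<in> E}. (\<lambda>q. \<alpha> # q) ` mpaths I C d M \<nu> \<beta>)"
proof (intro set_eqI iffI)
  fix p assume "p \<in> mpaths I C d M \<alpha> \<beta>"
  then obtain q where p: "p = \<alpha> # q" "last p = \<beta>" "successively (\<lambda>a b. (a, b) \<in> E) p"
    by (cases p) (auto simp: mpaths_eq)
  show "p \<in> (if \<alpha> = \<beta> then {[\<alpha>]} else {}) \<union>
     (\<Union>\<nu>\<in>{\<nu>. (\<alpha>, \<nu>) \<in> E}. (\<lambda>q. \<alpha> # q) ` mpaths I C d M \<nu> \<beta>)"
  proof (cases "q = []")
    case False
    then have "(\<alpha>, hd q) \<in> E" "q \<in> mpaths I C d M (hd q) \<beta>"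
      using p by (auto simp: mpaths_eq successively_Cons)
    then show ?thesis using p(1) by blast
  qed (use p in simp)
next
  fix p assume "p \<in> (if \<alpha> = \<beta> then {[\<alpha>]} else {}) \<union>
     (\<Union>\<nu>\<in>{\<nu>. (\<alpha>, \<nu>) \<in> E}. (\<lambda>q. \<alpha> # q) ` mpaths I C d M \<nu> \<beta>)"
  then show "p \<in> mpaths I C d M \<alpha> \<beta>"
    by (auto simp: mpaths_eq successively_Cons split: if_splits)
qed

lemma Gamma_last:
  assumes "x \<in> C \<alpha>"
  shows "\<Gamma> \<beta> \<alpha> x = (if \<alpha> = \<beta> then x else 0) + (\<Sum>\<delta>\<in>{\<delta>. (\<delta>, \<beta>) \<in> E}. mstep I C d M \<delta> \<beta> (\<Gamma> \<delta> \<alpha> x))"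
proof -
  let ?A = "if \<alpha> = \<beta> then {[\<alpha>]} else {}"
  let ?N = "{\<delta>. (\<delta>, \<beta>) \<in> E}"
  let ?P = "\<lambda>\<delta>. (\<lambda>q. q @ [\<beta>]) ` mpaths I C d M \<alpha> \<delta>"
  let ?st = "mstep I C d M"
  have "?A \<inter> (\<Union>\<delta>\<in>?N. ?P \<delta>) = {}" by (auto simp: mpaths_eq)
  then have "\<Gamma> \<beta> \<alpha> x = (\<Sum>p\<in>?A. pidx ?st p x) + (\<Sum>p\<in>(\<Union>\<delta>\<in>?N. ?P \<delta>). pidx ?st p x)"
    unfolding Gamma_def mpaths_snoc_decomp[of \<alpha> \<beta>]
    by (intro sum.union_disjoint) (simp_all add: finite_in_neighbours finite_mpaths)
  also have "(\<Sum>p\<in>?A. pidx ?st p x) = (if \<alpha> = \<beta> then x else 0)" by simp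
  also have "(\<Sum>p\<in>(\<Union>\<delta>\<in>?N. ?P \<delta>). pidx ?st p x) = (\<Sum>\<delta>\<in>?N. \<Sum>p\<in>?P \<delta>. pidx ?st p x)"
    by (rule sum.UNION_disjoint[OF finite_in_neighbours]) (simp add: finite_mpaths, auto simp: mpaths_eq)
  also have "\<dots> = (\<Sum>\<delta>\<in>?N. ?st \<delta> \<beta> (\<Gamma> \<delta> \<alpha> x))"
  proof (rule sum.cong[OF refl])
    fix \<delta> assume "\<delta> \<in> ?N"
    then have "linear_on (C \<delta>) (?st \<delta> \<beta>)" using mstep_linear by blast
    have "(\<Sum>p\<in>?P \<delta>. pidx ?st p x) = (\<Sum>q\<in>mpaths I C d M \<alpha> \<delta>. pidx ?st (q @ [\<beta>]) x)"
      by (rule sum.reindex_cong[of "\<lambda>q. q @ [\<beta>]"]) (auto simp: inj_on_def)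
    also have "\<dots> = (\<Sum>q\<in>mpaths I C d M \<alpha> \<delta>. ?st \<delta> \<beta> (pidx ?st q x))"
      by (rule sum.cong[OF refl]) (auto simp: mpaths_eq pidx_snoc)
    also have "\<dots> = ?st \<delta> \<beta> (\<Gamma> \<delta> \<alpha> x)"
      unfolding Gamma_def
      by (rule linear_on_sum[OF \<open>linear_on (C \<delta>) _\<close> subspace_summand, symmetric])
        (rule pidx_in[OF _ assms])
    finally show "(\<Sum>p\<in>?P \<delta>. pidx ?st p x) = ?st \<delta> \<beta> (\<Gamma> \<delta> \<alpha> x)" .
  qed
  finally show ?thesis .
qed

lemma Gamma_first:
  "\<Gamma> \<beta> \<alpha> x = (if \<alpha> = \<beta> then x else 0) + (\<Sum>\<nu>\<in>{\<nu>. (\<alpha>, \<nu>) \<in> E}. \<Gamma> \<beta> \<nu> (mstep I C d M \<alpha> \<nu> x))"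
proof -
  let ?A = "if \<alpha> = \<beta> then {[\<alpha>]} else {}"
  let ?N = "{\<nu>. (\<alpha>, \<nu>) \<in> E}"
  let ?P = "\<lambda>\<nu>. (\<lambda>q. \<alpha> # q) ` mpaths I C d M \<nu> \<beta>"
  let ?st = "mstep I C d M"
  have "?A \<inter> (\<Union>\<nu>\<in>?N. ?P \<nu>) = {}" by (auto simp: mpaths_eq)
  then have "\<Gamma> \<beta> \<alpha> x = (\<Sum>p\<in>?A. pidx ?st p x) + (\<Sum>p\<in>(\<Union>\<nu>\<in>?N. ?P \<nu>). pidx ?st p x)"
    unfolding Gamma_def mpaths_Cons_decomp[of \<alpha> \<beta>]
    by (intro sum.union_disjoint) (simp_all add: finite_out_neighbours finite_mpaths)
  also have "(\<Sum>p\<in>?A. pidx ?st p x) = (if \<alpha> = \<beta> then x else 0)" by simp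
  also have "(\<Sum>p\<in>(\<Union>\<nu>\<in>?N. ?P \<nu>). pidx ?st p x) = (\<Sum>\<nu>\<in>?N. \<Sum>p\<in>?P \<nu>. pidx ?st p x)"
    by (rule sum.UNION_disjoint[OF finite_out_neighbours]) (simp add: finite_mpaths, auto simp: mpaths_eq)
  also have "\<dots> = (\<Sum>\<nu>\<in>?N. \<Gamma> \<beta> \<nu> (?st \<alpha> \<nu> x))"
  proof (rule sum.cong[OF refl])
    fix \<nu> assume "\<nu> \<in> ?N"
    have "(\<Sum>p\<in>?P \<nu>. pidx ?st p x) = (\<Sum>q\<in>mpaths I C d M \<nu> \<beta>. pidx ?st (\<alpha> # q) x)"
      by (rule sum.reindex_cong[of "\<lambda>q. \<alpha> # q"]) (auto simp: inj_on_def)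
    also have "\<dots> = (\<Sum>q\<in>mpaths I C d M \<nu> \<beta>. pidx ?st q (?st \<alpha> \<nu> x))"
      by (rule sum.cong[OF refl]) (auto simp: mpaths_eq pidx_Cons)
    finally show "(\<Sum>p\<in>?P \<nu>. pidx ?st p x) = \<Gamma> \<beta> \<nu> (?st \<alpha> \<nu> x)" by (simp add: Gamma_def)
  qed
  finally show ?thesis .
qed


end

section \<open>The Morse retraction in degrees \<open>n\<close> and \<open>n - 1\<close>\<close>

definition morse_homotopy ::
  "(nat \<Rightarrow> 'c set) \<Rightarrow> ('c \<Rightarrow> 'v::real_vector set) \<Rightarrow> ('v \<Rightarrow> 'v) \<Rightarrow> ('c \<times> 'c) set \<Rightarrow> nat \<Rightarrow> 'v \<Rightarrow> 'v" where
  "morse_homotopy I C d M n x = (\<Sum>\<alpha>\<in>I n. \<Sum>\<beta>\<in>I (Suc n). Gamma I C d M \<beta> \<alpha> (comp I C n \<alpha> x))"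

context morse_complex
begin

abbreviation "\<Phi> \<equiv> Phi I C d M"
abbreviation "\<Psi> \<equiv> Psi I C d M"
abbreviation "h \<equiv> morse_homotopy I C d M"

lemma linear_on_Gamma_sum: "linear_on (chains I C n) (\<lambda>x. \<Sum>\<alpha>\<in>A. \<Sum>\<beta>\<in>B. \<Gamma> \<beta> \<alpha> (comp I C n \<alpha> x))"
proof (rule linear_on_compose_sum)
  fix \<alpha> assume "\<alpha> \<in> A"
  have "linear_on (C \<alpha>) (\<lambda>y. \<Sum>\<beta>\<in>B. \<Gamma> \<beta> \<alpha> y)"
    by (intro linear_on_compose_sum linear_on_Gamma)
  moreover have "comp I C n \<alpha> ` chains I C n \<subseteq> C \<alpha>" using comp_in by blast
  ultimately show "linear_on (chains I C n) (\<lambda>x. \<Sum>\<beta>\<in>B. \<Gamma> \<beta> \<alpha> (comp I C n \<alpha> x))"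
    using linear_on_compose[OF linear_on_comp] by blast
qed

lemma Gamma_sum_summand:
  assumes "\<alpha> \<in> I n" "x \<in> C \<alpha>" "A \<subseteq> I n"
  shows "(\<Sum>\<alpha>'\<in>A. \<Sum>\<beta>\<in>B. \<Gamma> \<beta> \<alpha>' (comp I C n \<alpha>' x)) = (if \<alpha> \<in> A then \<Sum>\<beta>\<in>B. \<Gamma> \<beta> \<alpha> x else 0)"
proof -
  have "finite A" using assms(3) finite_cells finite_subset by blast
  moreover have "(\<Sum>\<beta>\<in>B. \<Gamma> \<beta> \<alpha>' (comp I C n \<alpha>' x)) = (if \<alpha>' = \<alpha> then \<Sum>\<beta>\<in>B. \<Gamma> \<beta> \<alpha> x else 0)" for \<alpha>'
    using comp_summand[OF assms(1,2)] by (simp add: Gamma_0)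
  ultimately show ?thesis by simp
qed

lemma linear_on_Phi: "linear_on (chains I C n) (\<Phi> n)"
  using linear_on_Gamma_sum[where A="I n \<inter> U" and B="I n"] by (simp add: Phi_def[abs_def])

lemma linear_on_Psi: "linear_on (chains I C n) (\<Psi> n)"
  using linear_on_Gamma_sum[where A="I n" and B="I n \<inter> U"] by (simp add: Psi_def[abs_def])

lemma linear_on_homotopy: "linear_on (chains I C n) (h n)"
  using linear_on_Gamma_sum[where A="I n" and B="I (Suc n)"] by (simp add: morse_homotopy_def[abs_def])

lemma Gamma_column_in_chains:
  assumes "v \<in> C \<gamma>"
  shows "(\<Sum>\<delta>\<in>I k. \<Gamma> \<delta> \<gamma> v) \<in> chains I C k"
proof (rule subspace_sum[OF subspace_chains])
  fix \<delta> assume "\<delta> \<in> I k"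
  then show "\<Gamma> \<delta> \<gamma> v \<in> chains I C k" by (rule summand_in_chains[OF _ Gamma_in[OF assms]])
qed

lemma Phi_in_chains: "x \<in> chains I C n \<Longrightarrow> \<Phi> n x \<in> chains I C n"
  unfolding Phi_def by (rule subspace_sum[OF subspace_chains], rule Gamma_column_in_chains, rule comp_in)

lemma homotopy_in_chains: "x \<in> chains I C n \<Longrightarrow> h n x \<in> chains I C (Suc n)"
  unfolding morse_homotopy_def
  by (rule subspace_sum[OF subspace_chains], rule Gamma_column_in_chains, rule comp_in)

lemma Psi_in_mchains:
  assumes "x \<in> chains I C n"
  shows "\<Psi> n x \<in> mchains I C M n"
proof -
  have "\<Psi> n x = (\<Sum>\<beta>\<in>I n \<inter> U. \<Sum>\<alpha>\<in>I n. \<Gamma> \<beta> \<alpha> (comp I C n \<alpha> x))"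
    unfolding Psi_def by (rule sum.swap)
  moreover have "\<forall>\<beta>\<in>I n \<inter> U. (\<Sum>\<alpha>\<in>I n. \<Gamma> \<beta> \<alpha> (comp I C n \<alpha> x)) \<in> C \<beta>"
    using comp_in[OF assms] by (intro ballI subspace_sum[OF subspace_summand] Gamma_in)
  ultimately show ?thesis unfolding mchains_def chains_def by blast
qed

lemma Psi_in_chains: "x \<in> chains I C n \<Longrightarrow> \<Psi> n x \<in> chains I C n"
  using Psi_in_mchains mchains_subset_chains by blast

lemma Phi_Psi_minus_id_in_chains: "s \<in> chains I C n \<Longrightarrow> \<Phi> n (\<Psi> n s) - s \<in> chains I C n"
  using subspace_diff[OF subspace_chains Phi_in_chains[OF Psi_in_chains]] by blast

lemma comp_boundary_Gamma_column:
  assumes "\<beta> \<in> I k" "v \<in> C \<gamma>"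
  shows "comp I C k \<beta> (d (\<Sum>\<delta>\<in>I (Suc k). \<Gamma> \<delta> \<gamma> v)) = (\<Sum>\<delta>\<in>I (Suc k). blk I C d \<beta> \<delta> (\<Gamma> \<delta> \<gamma> v))"
proof -
  have in_chains: "\<Gamma> \<delta> \<gamma> v \<in> chains I C (Suc k)" if "\<delta> \<in> I (Suc k)" for \<delta>
    by (rule summand_in_chains[OF that Gamma_in[OF assms(2)]])
  have "d (\<Sum>\<delta>\<in>I (Suc k). \<Gamma> \<delta> \<gamma> v) = (\<Sum>\<delta>\<in>I (Suc k). d (\<Gamma> \<delta> \<gamma> v))"
    by (rule linear_on_sum[OF linear_on_d subspace_chains in_chains])
  also have "comp I C k \<beta> \<dots> = (\<Sum>\<delta>\<in>I (Suc k). comp I C k \<beta> (d (\<Gamma> \<delta> \<gamma> v)))"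
    by (rule linear_on_sum[OF linear_on_comp subspace_chains d_chains[OF in_chains]])
  finally show ?thesis using blk_eq[OF assms(1)] by simp
qed

lemma boundary_Gamma_lower_cell:
  assumes "\<beta> \<in> I k" "\<beta> \<notin> Domain M" "x \<in> C \<alpha>"
  shows "(\<Sum>\<tau>\<in>I (Suc k). blk I C d \<beta> \<tau> (\<Gamma> \<tau> \<alpha> x)) =
    \<Gamma> \<beta> \<alpha> x - (if \<alpha> = \<beta> then x else 0) + (\<Sum>\<tau>\<in>{\<tau> \<in> I (Suc k). (\<tau>, \<beta>) \<in> M}. blk I C d \<beta> \<tau> (\<Gamma> \<tau> \<alpha> x))"
proof -
  let ?F = "\<lambda>\<tau>. blk I C d \<beta> \<tau> (\<Gamma> \<tau> \<alpha> x)"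
  let ?T = "{\<tau> \<in> I (Suc k). (\<tau>, \<beta>) \<in> edges I C d \<and> (\<tau>, \<beta>) \<notin> M}"
  let ?M = "{\<tau> \<in> I (Suc k). (\<tau>, \<beta>) \<in> M}"
  have in_neighbours: "{\<delta>. (\<delta>, \<beta>) \<in> E} = ?T"
  proof (intro set_eqI iffI)
    fix \<delta> assume "\<delta> \<in> {\<delta>. (\<delta>, \<beta>) \<in> E}"
    then have "(\<delta>, \<beta>) \<in> E" by simp
    then show "\<delta> \<in> ?T"
    proof (cases rule: medgesE)
      case (down k')
      then show ?thesis using assms(1) level_unique by blast
    next
      case (up k')
      then show ?thesis using assms(2) by blast
    qed
  qed (auto simp: medges_def)
  have "mstep I C d M \<tau> \<beta> = blk I C d \<beta> \<tau>" for \<tau>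
    using assms(2) by (intro mstep_down) blast
  then have "\<Gamma> \<beta> \<alpha> x - (if \<alpha> = \<beta> then x else 0) = sum ?F ?T"
    using Gamma_last[OF assms(3), of \<beta>] in_neighbours by simp
  moreover have "(\<Sum>\<tau>\<in>I (Suc k). ?F \<tau>) = sum ?F (?T \<union> ?M)"
  proof (rule sum.mono_neutral_right[OF finite_cells])
    show "\<forall>\<tau>\<in>I (Suc k) - (?T \<union> ?M). ?F \<tau> = 0"
      using blk_eq_0_if_not_edge[OF _ _ assms(1) Gamma_in[OF assms(3)]] by blast
  qed auto
  moreover have "sum ?F (?T \<union> ?M) = sum ?F ?T + sum ?F ?M"
    by (rule sum.union_disjoint) (auto simp: finite_cells)
  ultimately show ?thesis by simp
qed

text \<open>The only in-neighbour of \<open>\<tau>0\<close> reachable from \<open>\<alpha>\<close> is \<open>\<beta>\<close>, via the reversed matched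
  edge, so \<open>\<Gamma> \<tau>0 \<alpha> x\<close> is minus the preimage of \<open>\<Gamma> \<beta> \<alpha> x\<close> under \<open>blk I C d \<beta> \<tau>0\<close>.\<close>

lemma blk_Gamma_matched:
  assumes "(\<tau>0, \<beta>) \<in> M" "\<beta> \<in> I k" "x \<in> C \<alpha>" "\<alpha> \<noteq> \<tau>0"
    and unreachable: "\<And>\<delta>. \<delta> \<in> I (Suc (Suc k)) \<Longrightarrow> (\<alpha>, \<delta>) \<notin> E\<^sup>*"
  shows "blk I C d \<beta> \<tau>0 (\<Gamma> \<tau>0 \<alpha> x) = - \<Gamma> \<beta> \<alpha> x"
proof -
  obtain k' where k': "\<tau>0 \<in> I (Suc k')" "\<beta> \<in> I k'" using matched_levels[OF assms(1)] by blast
  then have \<tau>0: "\<tau>0 \<in> I (Suc k)" using assms(2) level_unique by blast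
  let ?st = "mstep I C d M"
  have "(\<Sum>\<delta>\<in>{\<delta>. (\<delta>, \<tau>0) \<in> E}. ?st \<delta> \<tau>0 (\<Gamma> \<delta> \<alpha> x)) = ?st \<beta> \<tau>0 (\<Gamma> \<beta> \<alpha> x)"
  proof (rule sum_eq_single[OF finite_in_neighbours])
    show "\<beta> \<in> {\<delta>. (\<delta>, \<tau>0) \<in> E}" using assms(1) by (simp add: medges_def)
  next
    fix \<delta> assume "\<delta> \<in> {\<delta>. (\<delta>, \<tau>0) \<in> E}" "\<delta> \<noteq> \<beta>"
    then have "(\<delta>, \<tau>0) \<in> E" by simp
    then show "?st \<delta> \<tau>0 (\<Gamma> \<delta> \<alpha> x) = 0"
    proof (cases rule: medgesE)
      case (down j)
      then have "\<delta> \<in> I (Suc (Suc k))" using \<tau>0 level_unique by blast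
      then have "\<Gamma> \<delta> \<alpha> x = 0" using unreachable Gamma_eq_0_if_unreachable by blast
      then show ?thesis
        using mstep_linear[OF \<open>(\<delta>, \<tau>0) \<in> E\<close>] linear_on_0 subspace_0[OF subspace_summand] by metis
    next
      case (up j)
      then show ?thesis using matched_unique_lower[OF assms(1)] \<open>\<delta> \<noteq> \<beta>\<close> by blast
    qed
  qed
  then have "\<Gamma> \<tau>0 \<alpha> x = - the_inv_into (C \<tau>0) (blk I C d \<beta> \<tau>0) (\<Gamma> \<beta> \<alpha> x)"
    using Gamma_last[OF assms(3), of \<tau>0] assms(4) mstep_up[OF assms(1)] by simp
  moreover have "the_inv_into (C \<tau>0) (blk I C d \<beta> \<tau>0) (\<Gamma> \<beta> \<alpha> x) \<in> C \<tau>0"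
    and "blk I C d \<beta> \<tau>0 (the_inv_into (C \<tau>0) (blk I C d \<beta> \<tau>0) (\<Gamma> \<beta> \<alpha> x)) = \<Gamma> \<beta> \<alpha> x"
    using bij_betwE[OF bij_betw_the_inv_into[OF matched_bij[OF assms(1)]]] Gamma_in[OF assms(3)]
      f_the_inv_into_f_bij_betw[OF matched_bij[OF assms(1)]] by blast+
  ultimately show ?thesis
    using linear_on_neg[OF linear_on_blk[OF \<tau>0 assms(2)]] by simp
qed

lemma boundary_Gamma_matched_cell:
  assumes "(\<tau>0, \<beta>) \<in> M" "\<beta> \<in> I k" "x \<in> C \<alpha>" "\<alpha> \<noteq> \<tau>0"
    and "\<And>\<delta>. \<delta> \<in> I (Suc (Suc k)) \<Longrightarrow> (\<alpha>, \<delta>) \<notin> E\<^sup>*"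
  shows "(\<Sum>\<tau>\<in>I (Suc k). blk I C d \<beta> \<tau> (\<Gamma> \<tau> \<alpha> x)) = - (if \<alpha> = \<beta> then x else 0)"
proof -
  obtain k' where "\<tau>0 \<in> I (Suc k')" "\<beta> \<in> I k'" using matched_levels[OF assms(1)] by blast
  then have "{\<tau> \<in> I (Suc k). (\<tau>, \<beta>) \<in> M} = {\<tau>0}"
    using assms(1,2) level_unique matched_unique_upper by blast
  moreover have "\<beta> \<notin> Domain M" using assms(1) Domain_Range_disjoint by blast
  ultimately show ?thesis
    using boundary_Gamma_lower_cell[OF assms(2) _ assms(3)] blk_Gamma_matched[OF assms] by simp
qed

lemma boundary_Gamma_unmatched_cell:
  assumes "\<beta> \<in> I k" "\<beta> \<in> U" "x \<in> C \<alpha>"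
  shows "(\<Sum>\<tau>\<in>I (Suc k). blk I C d \<beta> \<tau> (\<Gamma> \<tau> \<alpha> x)) = \<Gamma> \<beta> \<alpha> x - (if \<alpha> = \<beta> then x else 0)"
proof -
  have no_match: "{\<tau> \<in> I (Suc k). (\<tau>, \<beta>) \<in> M} = {}" and not_Dom: "\<beta> \<notin> Domain M"
    using assms(2) unmatched_iff by blast+
  from boundary_Gamma_lower_cell[OF assms(1) not_Dom assms(3)] show ?thesis
    unfolding no_match by simp
qed

lemma not_Domain_if_nfree: "nfree I M n \<Longrightarrow> \<beta> \<in> I n \<Longrightarrow> \<beta> \<notin> Domain M"
  unfolding nfree_def using matched_levels level_unique by blast

lemma not_Range_if_nfree: "nfree I M (Suc m) \<Longrightarrow> \<alpha> \<in> I m \<Longrightarrow> \<alpha> \<notin> Range M"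
  unfolding nfree_def using matched_levels level_unique by blast

lemma Gamma_from_unmatched_if_nfree:
  assumes "nfree I M n" "\<gamma> \<in> I n" "\<gamma> \<in> U" "\<beta> \<in> I n"
  shows "\<Gamma> \<beta> \<gamma> y = (if \<beta> = \<gamma> then y else 0)"
proof -
  have "\<Gamma> \<beta> \<nu> (mstep I C d M \<gamma> \<nu> y) = 0" if "(\<gamma>, \<nu>) \<in> E" for \<nu>
    using that
  proof (cases rule: medgesE)
    case (down k)
    then have "k < n" using assms(2) level_unique by blast
    then show ?thesis
      using unreachable_if_nfree[OF assms(1) down(2) _ assms(4)] Gamma_eq_0_if_unreachable by blast
  next
    case (up k)
    then show ?thesis using assms(3) unmatched_iff by blast
  qed
  then show ?thesis using Gamma_first[of \<beta> \<gamma> y] by auto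
qed

lemma Phi_mchains_if_nfree:
  assumes "nfree I M n" "x \<in> mchains I C M n"
  shows "\<Phi> n x = x"
proof -
  obtain f where f: "\<forall>\<alpha>\<in>I n. f \<alpha> \<in> C \<alpha>" "\<forall>\<alpha>\<in>I n. \<alpha> \<notin> U \<longrightarrow> f \<alpha> = 0" "x = sum f (I n)"
    using mchainsE[OF assms(2)] by blast
  have "\<Phi> n x = (\<Sum>\<alpha>\<in>I n \<inter> U. \<Sum>\<beta>\<in>I n. if \<beta> = \<alpha> then f \<alpha> else 0)"
    unfolding Phi_def
    using comp_sum[OF f(1)] f(3) Gamma_from_unmatched_if_nfree[OF assms(1)] by (intro sum.cong) auto
  also have "\<dots> = (\<Sum>\<alpha>\<in>I n \<inter> U. f \<alpha>)"
    by (simp add: finite_cells)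
  also have "\<dots> = (\<Sum>\<alpha>\<in>I n. f \<alpha>)"
    by (rule sum.mono_neutral_left) (use f(2) finite_cells in auto)
  finally show ?thesis using f(3) by simp
qed

lemma boundary_Gamma_cell_if_nfree:
  assumes "nfree I M n" "\<alpha> \<in> I n" "\<beta> \<in> I n" "x \<in> C \<alpha>"
  shows "(\<Sum>\<tau>\<in>I (Suc n). blk I C d \<beta> \<tau> (\<Gamma> \<tau> \<alpha> x)) =
    (if \<beta> \<in> U then \<Gamma> \<beta> \<alpha> x else 0) - (if \<alpha> = \<beta> then x else 0)"
proof (cases "\<beta> \<in> U")
  case True
  then show ?thesis using boundary_Gamma_unmatched_cell[OF assms(3) True assms(4)] by simp
next
  case False
  then obtain \<tau>0 where \<tau>0: "(\<tau>0, \<beta>) \<in> M"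
    using not_Domain_if_nfree[OF assms(1,3)] unmatched_iff by blast
  then have "\<tau>0 \<in> I (Suc n)" using matched_levels assms(3) level_unique by blast
  then have "\<alpha> \<noteq> \<tau>0" using assms(2) level_unique by fastforce
  then show ?thesis
    using boundary_Gamma_matched_cell[OF \<tau>0 assms(3,4)] unreachable_two_levels_up[OF assms(2)] False
    by simp
qed

lemma boundary_homotopy_summand:
  assumes "nfree I M n" "\<alpha> \<in> I n" "x \<in> C \<alpha>"
  shows "d (\<Sum>\<tau>\<in>I (Suc n). \<Gamma> \<tau> \<alpha> x) = (\<Sum>\<beta>\<in>I n \<inter> U. \<Gamma> \<beta> \<alpha> x) - x"
proof -
  have "d (\<Sum>\<tau>\<in>I (Suc n). \<Gamma> \<tau> \<alpha> x) = (\<Sum>\<beta>\<in>I n. comp I C n \<beta> (d (\<Sum>\<tau>\<in>I (Suc n). \<Gamma> \<tau> \<alpha> x)))"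
    using sum_comp[OF d_chains[OF Gamma_column_in_chains[OF assms(3)]]] by simp
  also have "\<dots> = (\<Sum>\<beta>\<in>I n. (if \<beta> \<in> U then \<Gamma> \<beta> \<alpha> x else 0) - (if \<alpha> = \<beta> then x else 0))"
    using comp_boundary_Gamma_column[OF _ assms(3)] boundary_Gamma_cell_if_nfree[OF assms(1,2) _ assms(3)]
    by simp
  also have "\<dots> = (\<Sum>\<beta>\<in>I n \<inter> U. \<Gamma> \<beta> \<alpha> x) - x"
    using assms(2) finite_cells by (simp add: sum_subtractf sum.If_cases Int_commute)
  finally show ?thesis .
qed

lemma Phi_Psi_minus_id_boundary:
  assumes "nfree I M n" "s \<in> chains I C n"
  shows "\<Phi> n (\<Psi> n s) - s = d (h n s)"
proof -
  have "\<Phi> n (\<Psi> n s) - s = \<Psi> n s - s"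
    using Phi_mchains_if_nfree[OF assms(1) Psi_in_mchains[OF assms(2)]] by simp
  also have "\<dots> = (\<Sum>\<alpha>\<in>I n. (\<Sum>\<beta>\<in>I n \<inter> U. \<Gamma> \<beta> \<alpha> (comp I C n \<alpha> s)) - comp I C n \<alpha> s)"
    unfolding Psi_def using sum_comp[OF assms(2)] by (simp add: sum_subtractf)
  also have "\<dots> = (\<Sum>\<alpha>\<in>I n. d (\<Sum>\<tau>\<in>I (Suc n). \<Gamma> \<tau> \<alpha> (comp I C n \<alpha> s)))"
    using boundary_homotopy_summand[OF assms(1) _ comp_in[OF assms(2)]] by simp
  also have "\<dots> = d (h n s)"
    unfolding morse_homotopy_def
    by (rule linear_on_sum[OF linear_on_d subspace_chains Gamma_column_in_chains[OF comp_in[OF assms(2)]],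
        symmetric])
  finally show ?thesis .
qed

lemma Gamma_to_unmatched_if_nfree:
  assumes "nfree I M (Suc m)" "\<alpha> \<in> I m" "\<gamma> \<in> I m" "\<gamma> \<in> U" "x \<in> C \<alpha>"
  shows "\<Gamma> \<gamma> \<alpha> x = (if \<gamma> = \<alpha> then x else 0)"
proof -
  have "mstep I C d M \<delta> \<gamma> (\<Gamma> \<delta> \<alpha> x) = 0" if "(\<delta>, \<gamma>) \<in> E" for \<delta>
    using that
  proof (cases rule: medgesE)
    case (down k)
    then have "\<delta> \<in> I (Suc m)" using assms(3) level_unique by blast
    then have "\<Gamma> \<delta> \<alpha> x = 0"
      using unreachable_if_nfree[OF assms(1,2)] Gamma_eq_0_if_unreachable by blast
    then show ?thesis
      using mstep_linear[OF that] linear_on_0 subspace_0[OF subspace_summand] by metis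
  next
    case (up k)
    then show ?thesis using assms(4) unmatched_iff by blast
  qed
  then show ?thesis using Gamma_last[OF assms(5), of \<gamma>] by auto
qed

lemma Psi_summand_if_nfree:
  assumes "nfree I M (Suc m)" "\<alpha> \<in> I m" "x \<in> C \<alpha>"
  shows "\<Psi> m x = (if \<alpha> \<in> U then x else 0)"
proof -
  have "\<Psi> m x = (\<Sum>\<gamma>\<in>I m \<inter> U. \<Gamma> \<gamma> \<alpha> x)"
    unfolding Psi_def using Gamma_sum_summand[OF assms(2,3)] assms(2) by simp
  also have "\<dots> = (\<Sum>\<gamma>\<in>I m \<inter> U. if \<gamma> = \<alpha> then x else 0)"
    using Gamma_to_unmatched_if_nfree[OF assms(1,2) _ _ assms(3)] by simp
  also have "\<dots> = (if \<alpha> \<in> U then x else 0)"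
    using assms(2) finite_cells by simp
  finally show ?thesis .
qed

lemma Phi_unmatched_summand:
  assumes "\<alpha> \<in> I m" "\<alpha> \<in> U" "x \<in> C \<alpha>"
  shows "\<Phi> m x = (\<Sum>\<beta>\<in>I m. \<Gamma> \<beta> \<alpha> x)"
  unfolding Phi_def using Gamma_sum_summand[OF assms(1,3)] assms(1,2) by simp

lemma Gamma_boundary_upper_cell:
  assumes "\<alpha> \<in> I (Suc k)" "\<alpha> \<notin> Range M" "x \<in> C \<alpha>"
  shows "(\<Sum>\<nu>\<in>I k. \<Gamma> \<beta> \<nu> (blk I C d \<nu> \<alpha> x)) =
    \<Gamma> \<beta> \<alpha> x - (if \<alpha> = \<beta> then x else 0) + (\<Sum>\<nu>\<in>{\<nu> \<in> I k. (\<alpha>, \<nu>) \<in> M}. \<Gamma> \<beta> \<nu> (blk I C d \<nu> \<alpha> x))"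
proof -
  let ?F = "\<lambda>\<nu>. \<Gamma> \<beta> \<nu> (blk I C d \<nu> \<alpha> x)"
  let ?T = "{\<nu> \<in> I k. (\<alpha>, \<nu>) \<in> edges I C d \<and> (\<alpha>, \<nu>) \<notin> M}"
  let ?M = "{\<nu> \<in> I k. (\<alpha>, \<nu>) \<in> M}"
  have out_neighbours: "{\<nu>. (\<alpha>, \<nu>) \<in> E} = ?T"
  proof (intro set_eqI iffI)
    fix \<nu> assume "\<nu> \<in> {\<nu>. (\<alpha>, \<nu>) \<in> E}"
    then have "(\<alpha>, \<nu>) \<in> E" by simp
    then show "\<nu> \<in> ?T"
    proof (cases rule: medgesE)
      case (down k')
      then show ?thesis using assms(1) level_unique by blast
    next
      case (up k')
      then show ?thesis using assms(2) by blast
    qed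
  qed (auto simp: medges_def)
  have "mstep I C d M \<alpha> \<nu> = blk I C d \<nu> \<alpha>" for \<nu>
    using assms(2) by (intro mstep_down) blast
  then have "\<Gamma> \<beta> \<alpha> x - (if \<alpha> = \<beta> then x else 0) = sum ?F ?T"
    using Gamma_first[of \<beta> \<alpha> x] out_neighbours by simp
  moreover have "(\<Sum>\<nu>\<in>I k. ?F \<nu>) = sum ?F (?T \<union> ?M)"
  proof (rule sum.mono_neutral_right[OF finite_cells])
    show "\<forall>\<nu>\<in>I k - (?T \<union> ?M). ?F \<nu> = 0"
    proof
      fix \<nu> assume \<nu>: "\<nu> \<in> I k - (?T \<union> ?M)"
      then have "blk I C d \<nu> \<alpha> x = 0" using blk_eq_0_if_not_edge assms(1,3) by blast
      then show "?F \<nu> = 0" by (simp add: Gamma_0)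
    qed
  qed auto
  moreover have "sum ?F (?T \<union> ?M) = sum ?F ?T + sum ?F ?M"
    by (rule sum.union_disjoint) (auto simp: finite_cells)
  ultimately show ?thesis by simp
qed

text \<open>Dually, the only out-neighbour of \<open>\<nu>0\<close> from which \<open>\<beta>\<close> is reachable is \<open>\<alpha>\<close>.\<close>

lemma Gamma_blk_matched:
  assumes "(\<alpha>, \<nu>0) \<in> M" "\<alpha> \<in> I (Suc k)" "\<beta> \<in> I (Suc k)" "x \<in> C \<alpha>"
  shows "\<Gamma> \<beta> \<nu>0 (blk I C d \<nu>0 \<alpha> x) = - \<Gamma> \<beta> \<alpha> x"
proof -
  obtain k' where k': "\<alpha> \<in> I (Suc k')" "\<nu>0 \<in> I k'" using matched_levels[OF assms(1)] by blast
  then have \<nu>0: "\<nu>0 \<in> I k" using assms(2) level_unique by blast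
  let ?y = "blk I C d \<nu>0 \<alpha> x"
  let ?st = "mstep I C d M"
  have "(\<Sum>\<mu>\<in>{\<mu>. (\<nu>0, \<mu>) \<in> E}. \<Gamma> \<beta> \<mu> (?st \<nu>0 \<mu> ?y)) = \<Gamma> \<beta> \<alpha> (?st \<nu>0 \<alpha> ?y)"
  proof (rule sum_eq_single[OF finite_out_neighbours])
    show "\<alpha> \<in> {\<mu>. (\<nu>0, \<mu>) \<in> E}" using assms(1) by (simp add: medges_def)
  next
    fix \<mu> assume "\<mu> \<in> {\<mu>. (\<nu>0, \<mu>) \<in> E}" "\<mu> \<noteq> \<alpha>"
    then have "(\<nu>0, \<mu>) \<in> E" by simp
    then show "\<Gamma> \<beta> \<mu> (?st \<nu>0 \<mu> ?y) = 0"
    proof (cases rule: medgesE)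
      case (down j)
      then have "\<beta> \<in> I (Suc (Suc j))" using \<nu>0 assms(3) level_unique by blast
      then show ?thesis
        by (intro Gamma_eq_0_if_unreachable unreachable_two_levels_up[OF down(2)])
    next
      case (up j)
      then show ?thesis using matched_unique_upper[OF assms(1)] \<open>\<mu> \<noteq> \<alpha>\<close> by blast
    qed
  qed
  moreover have "?st \<nu>0 \<alpha> ?y = - x"
    using mstep_up[OF assms(1)] the_inv_into_f_f[OF bij_betw_imp_inj_on[OF matched_bij[OF assms(1)]] assms(4)]
    by simp
  moreover have "\<nu>0 \<noteq> \<beta>" using \<nu>0 assms(3) level_unique[of \<beta> k "Suc k"] by auto
  ultimately show ?thesis
    using Gamma_first[of \<beta> \<nu>0 ?y] Gamma_neg[OF assms(4)] by simp
qed

lemma Gamma_boundary_matched_cell: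
  assumes "(\<alpha>, \<nu>0) \<in> M" "\<alpha> \<in> I (Suc k)" "\<beta> \<in> I (Suc k)" "x \<in> C \<alpha>"
  shows "(\<Sum>\<nu>\<in>I k. \<Gamma> \<beta> \<nu> (blk I C d \<nu> \<alpha> x)) = - (if \<alpha> = \<beta> then x else 0)"
proof -
  obtain k' where "\<alpha> \<in> I (Suc k')" "\<nu>0 \<in> I k'" using matched_levels[OF assms(1)] by blast
  then have "{\<nu> \<in> I k. (\<alpha>, \<nu>) \<in> M} = {\<nu>0}"
    using assms(1,2) level_unique matched_unique_lower by blast
  moreover have "\<alpha> \<notin> Range M" using assms(1) Domain_Range_disjoint by blast
  ultimately show ?thesis
    using Gamma_boundary_upper_cell[OF assms(2) _ assms(4)] Gamma_blk_matched[OF assms] by simp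
qed

lemma Gamma_boundary_unmatched_cell:
  assumes "\<alpha> \<in> I (Suc k)" "\<alpha> \<in> U" "x \<in> C \<alpha>"
  shows "(\<Sum>\<nu>\<in>I k. \<Gamma> \<beta> \<nu> (blk I C d \<nu> \<alpha> x)) = \<Gamma> \<beta> \<alpha> x - (if \<alpha> = \<beta> then x else 0)"
proof -
  have no_match: "{\<nu> \<in> I k. (\<alpha>, \<nu>) \<in> M} = {}" and not_Ran: "\<alpha> \<notin> Range M"
    using assms(2) unmatched_iff by blast+
  from Gamma_boundary_upper_cell[OF assms(1) not_Ran assms(3)] show ?thesis
    unfolding no_match by simp
qed

lemma homotopy_boundary_summand:
  assumes "\<alpha> \<in> I (Suc k)" "x \<in> C \<alpha>"
  shows "h k (d x) = (\<Sum>\<beta>\<in>I (Suc k). \<Sum>\<nu>\<in>I k. \<Gamma> \<beta> \<nu> (blk I C d \<nu> \<alpha> x))"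
proof -
  have "h k (d x) = (\<Sum>\<nu>\<in>I k. \<Sum>\<beta>\<in>I (Suc k). \<Gamma> \<beta> \<nu> (blk I C d \<nu> \<alpha> x))"
    unfolding morse_homotopy_def by (intro sum.cong refl) (simp add: blk_eq)
  also have "\<dots> = (\<Sum>\<beta>\<in>I (Suc k). \<Sum>\<nu>\<in>I k. \<Gamma> \<beta> \<nu> (blk I C d \<nu> \<alpha> x))"
    by (rule sum.swap)
  finally show ?thesis .
qed

lemma Phi_Psi_summand:
  assumes "nfree I M (Suc (Suc k))" "\<alpha> \<in> I (Suc k)" "x \<in> C \<alpha>"
  shows "\<Phi> (Suc k) (\<Psi> (Suc k) x) = x + h k (d x)"
proof (cases "\<alpha> \<in> U")
  case True
  have "\<Phi> (Suc k) (\<Psi> (Suc k) x) = (\<Sum>\<beta>\<in>I (Suc k). \<Gamma> \<beta> \<alpha> x)"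
    using Psi_summand_if_nfree[OF assms] Phi_unmatched_summand[OF assms(2) True assms(3)] True by simp
  moreover have "h k (d x) = (\<Sum>\<beta>\<in>I (Suc k). \<Gamma> \<beta> \<alpha> x) - x"
    using homotopy_boundary_summand[OF assms(2,3)] Gamma_boundary_unmatched_cell[OF assms(2) True assms(3)]
      assms(2) finite_cells by (simp add: sum_subtractf)
  ultimately show ?thesis by simp
next
  case False
  then obtain \<nu>0 where \<nu>0: "(\<alpha>, \<nu>0) \<in> M"
    using not_Range_if_nfree[OF assms(1,2)] unmatched_iff by blast
  have "\<Phi> (Suc k) (\<Psi> (Suc k) x) = 0"
    using Psi_summand_if_nfree[OF assms] False linear_on_0[OF linear_on_Phi subspace_0[OF subspace_chains]]
    by simp
  moreover have "h k (d x) = - x"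
    using homotopy_boundary_summand[OF assms(2,3)] Gamma_boundary_matched_cell[OF \<nu>0 assms(2) _ assms(3)]
      assms(2) finite_cells by (simp add: sum_negf)
  ultimately show ?thesis by simp
qed

lemma Phi_Psi_summand_0:
  assumes "nfree I M (Suc 0)" "\<alpha> \<in> I 0" "x \<in> C \<alpha>"
  shows "\<Phi> 0 (\<Psi> 0 x) = x"
proof -
  have "\<alpha> \<notin> Domain M" using assms(2) matched_levels level_unique by blast
  then have U: "\<alpha> \<in> U" using not_Range_if_nfree[OF assms(1,2)] unmatched_iff by blast
  have "{\<nu>. (\<alpha>, \<nu>) \<in> E} = {}"
  proof (intro equals0I)
    fix \<nu> assume "\<nu> \<in> {\<nu>. (\<alpha>, \<nu>) \<in> E}"
    then have "(\<alpha>, \<nu>) \<in> E" by simp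
    then show False
    proof (cases rule: medgesE)
      case (down k)
      then show False using assms(2) level_unique by blast
    next
      case (up k)
      then show False using U unmatched_iff by blast
    qed
  qed
  then have "\<Gamma> \<beta> \<alpha> x = (if \<alpha> = \<beta> then x else 0)" for \<beta>
    using Gamma_first[of \<beta> \<alpha> x] by simp
  then show ?thesis
    using Psi_summand_if_nfree[OF assms] Phi_unmatched_summand[OF assms(2) U assms(3)] U assms(2) finite_cells
    by simp
qed

lemma Phi_Psi_cycle:
  assumes "nfree I M (Suc m)" "w \<in> chains I C m" "d w = 0"
  shows "\<Phi> m (\<Psi> m w) = w"
proof -
  let ?w = "\<lambda>\<alpha>. comp I C m \<alpha> w"
  have w_in: "?w \<alpha> \<in> chains I C m" if "\<alpha> \<in> I m" for \<alpha>
    using summand_in_chains[OF that comp_in[OF assms(2)]] .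
  have "\<Psi> m (\<Sum>\<alpha>\<in>I m. ?w \<alpha>) = (\<Sum>\<alpha>\<in>I m. \<Psi> m (?w \<alpha>))"
    by (rule linear_on_sum[OF linear_on_Psi subspace_chains w_in])
  then have "\<Psi> m w = (\<Sum>\<alpha>\<in>I m. \<Psi> m (?w \<alpha>))" using sum_comp[OF assms(2)] by simp
  then have "\<Phi> m (\<Psi> m w) = (\<Sum>\<alpha>\<in>I m. \<Phi> m (\<Psi> m (?w \<alpha>)))"
    using linear_on_sum[OF linear_on_Phi subspace_chains Psi_in_chains[OF w_in]] by simp
  also have "\<dots> = w"
  proof (cases m)
    case 0
    then show ?thesis
      using Phi_Psi_summand_0 assms(1) comp_in[OF assms(2)] sum_comp[OF assms(2)] by simp
  next
    case (Suc k)
    have d_in: "d (?w \<alpha>) \<in> chains I C k" if "\<alpha> \<in> I m" for \<alpha>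
      using d_chains w_in[OF that] Suc by simp
    have "(\<Sum>\<alpha>\<in>I m. \<Phi> m (\<Psi> m (?w \<alpha>))) = (\<Sum>\<alpha>\<in>I m. ?w \<alpha>) + (\<Sum>\<alpha>\<in>I m. h k (d (?w \<alpha>)))"
      using Phi_Psi_summand assms(1) comp_in[OF assms(2)] Suc by (simp add: sum.distrib)
    also have "(\<Sum>\<alpha>\<in>I m. h k (d (?w \<alpha>))) = h k (\<Sum>\<alpha>\<in>I m. d (?w \<alpha>))"
      by (rule linear_on_sum[OF linear_on_homotopy subspace_chains d_in, symmetric])
    also have "(\<Sum>\<alpha>\<in>I m. d (?w \<alpha>)) = d (\<Sum>\<alpha>\<in>I m. ?w \<alpha>)"
      by (rule linear_on_sum[OF linear_on_d subspace_chains w_in, symmetric])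
    also have "\<dots> = d w" using sum_comp[OF assms(2)] by simp
    also have "h k (d w) = 0"
      using assms(3) linear_on_0[OF linear_on_homotopy subspace_0[OF subspace_chains]] by simp
    finally show ?thesis using sum_comp[OF assms(2)] by simp
  qed
  finally show ?thesis .
qed

lemma comp_boundary_Phi_matched:
  assumes "(\<alpha>0, \<beta>0) \<in> M" "\<alpha>0 \<in> I (Suc m)" "\<beta>0 \<in> I m" "x \<in> chains I C (Suc m)"
  shows "comp I C m \<beta>0 (d (\<Phi> (Suc m) x)) = 0"
proof -
  let ?col = "\<lambda>\<gamma>. \<Sum>\<delta>\<in>I (Suc m). \<Gamma> \<delta> \<gamma> (comp I C (Suc m) \<gamma> x)"
  have col_in: "?col \<gamma> \<in> chains I C (Suc m)" for \<gamma>
    by (rule Gamma_column_in_chains[OF comp_in[OF assms(4)]])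
  have "linear_on (chains I C (Suc m)) (\<lambda>y. comp I C m \<beta>0 (d y))"
    using linear_on_compose[OF linear_on_d _ linear_on_comp] d_chains by blast
  then have "comp I C m \<beta>0 (d (\<Phi> (Suc m) x)) = (\<Sum>\<gamma>\<in>I (Suc m) \<inter> U. comp I C m \<beta>0 (d (?col \<gamma>)))"
    unfolding Phi_def by (rule linear_on_sum[OF _ subspace_chains col_in])
  also have "\<dots> = 0"
  proof (intro sum.neutral ballI)
    fix \<gamma> assume \<gamma>: "\<gamma> \<in> I (Suc m) \<inter> U"
    then have "\<gamma> \<noteq> \<alpha>0" "\<gamma> \<notin> Range M" using assms(1) unmatched_iff by blast+
    then have unreachable: "(\<gamma>, \<delta>) \<notin> E\<^sup>*" if "\<delta> \<in> I (Suc (Suc m))" for \<delta>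
      using unreachable_level_up_from_unmatched \<gamma> that by blast
    have "\<gamma> \<noteq> \<beta>0" using \<gamma> assms(3) level_unique[of \<gamma> m "Suc m"] by auto
    have "comp I C m \<beta>0 (d (?col \<gamma>))
        = (\<Sum>\<delta>\<in>I (Suc m). blk I C d \<beta>0 \<delta> (\<Gamma> \<delta> \<gamma> (comp I C (Suc m) \<gamma> x)))"
      by (rule comp_boundary_Gamma_column[OF assms(3) comp_in[OF assms(4)]])
    also have "\<dots> = - (if \<gamma> = \<beta>0 then comp I C (Suc m) \<gamma> x else 0)"
      by (rule boundary_Gamma_matched_cell[OF assms(1,3) comp_in[OF assms(4)] \<open>\<gamma> \<noteq> \<alpha>0\<close> unreachable])
    finally show "comp I C m \<beta>0 (d (?col \<gamma>)) = 0" using \<open>\<gamma> \<noteq> \<beta>0\<close> by simp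
  qed
  finally show ?thesis .
qed

lemma Phi_Psi_minus_id_not_boundary:
  assumes "(\<alpha>0, \<beta>0) \<in> M" "\<alpha>0 \<in> I (Suc m)" "\<beta>0 \<in> I m"
  obtains s where "s \<in> chains I C (Suc m)"
    "\<Phi> (Suc m) (\<Psi> (Suc m) s) - s \<notin> d ` chains I C (Suc (Suc m))"
proof -
  obtain s where s: "s \<in> C \<alpha>0" "blk I C d \<beta>0 \<alpha>0 s \<noteq> 0"
    using assms(1) matched_edges unfolding edges_def by blast
  have s_in: "s \<in> chains I C (Suc m)" by (rule summand_in_chains[OF assms(2) s(1)])
  let ?P = "\<Phi> (Suc m) (\<Psi> (Suc m) s)"
  have P_in: "?P \<in> chains I C (Suc m)" by (rule Phi_in_chains[OF Psi_in_chains[OF s_in]])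
  have "comp I C m \<beta>0 (d (?P - s)) = comp I C m \<beta>0 (d ?P) - comp I C m \<beta>0 (d s)"
    using linear_on_diff[OF linear_on_d subspace_chains P_in s_in]
      linear_on_diff[OF linear_on_comp subspace_chains d_chains[OF P_in] d_chains[OF s_in]] by simp
  also have "\<dots> = - blk I C d \<beta>0 \<alpha>0 s"
    using comp_boundary_Phi_matched[OF assms Psi_in_chains[OF s_in]] blk_eq[OF assms(3)] by simp
  finally have nonzero: "comp I C m \<beta>0 (d (?P - s)) \<noteq> 0" using s(2) by simp
  have "?P - s \<notin> d ` chains I C (Suc (Suc m))"
  proof
    assume "?P - s \<in> d ` chains I C (Suc (Suc m))"
    then obtain a where "a \<in> chains I C (Suc (Suc m))" "?P - s = d a" by blast
    then have "comp I C m \<beta>0 (d (?P - s)) = 0"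
      using d_d linear_on_0[OF linear_on_comp subspace_0[OF subspace_chains]] by simp
    then show False using nonzero by contradiction
  qed
  then show thesis using that s_in by blast
qed

lemma nfree_iff_Phi_Psi_minus_id_boundaries:
  "nfree I M n \<longleftrightarrow> (\<forall>s\<in>chains I C n. \<Phi> n (\<Psi> n s) - s \<in> d ` chains I C (Suc n))"
proof (intro iffI ballI)
  fix s assume "nfree I M n" "s \<in> chains I C n"
  then show "\<Phi> n (\<Psi> n s) - s \<in> d ` chains I C (Suc n)"
    using Phi_Psi_minus_id_boundary homotopy_in_chains by simp
next
  assume boundaries: "\<forall>s\<in>chains I C n. \<Phi> n (\<Psi> n s) - s \<in> d ` chains I C (Suc n)"
  show "nfree I M n"
  proof (rule ccontr)
    assume "\<not> nfree I M n"
    then obtain \<alpha>0 \<beta>0 m where "(\<alpha>0, \<beta>0) \<in> M" "\<alpha>0 \<in> I (Suc m)" "\<beta>0 \<in> I m" and n: "n = Suc m"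
      unfolding nfree_def by blast
    then obtain s where "s \<in> chains I C n" "\<Phi> n (\<Psi> n s) - s \<notin> d ` chains I C (Suc n)"
      using Phi_Psi_minus_id_not_boundary unfolding n by blast
    then show False using boundaries by blast
  qed
qed

lemma oproj_ker_boundary_adj_eq_0_iff:
  assumes "y \<in> chains I C n"
  shows "oproj {x \<in> chains I C n. adj (chains I C (Suc n)) d x = 0} y = 0 \<longleftrightarrow> y \<in> d ` chains I C (Suc n)"
proof -
  obtain G where G: "finite G" "chains I C (Suc n) = span G" by (rule chains_span)
  have "linear_on (span G) d" using linear_on_d[of "Suc n"] G(2) by simp
  moreover have "d ` span G \<subseteq> chains I C n" using d_chains G(2) by blast
  ultimately show ?thesis
    unfolding G(2) by (rule oproj_ker_adj_eq_0_iff[OF G(1) _ subspace_chains _ assms])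
qed

lemma oproj_cycles_eq_0_if_Phi_Psi_fixes_cycles:
  assumes fix_cycles: "\<And>w. w \<in> chains I C m \<Longrightarrow> d w = 0 \<Longrightarrow> \<Phi> m (\<Psi> m w) = w"
    and s: "s \<in> chains I C m"
  shows "oproj {x \<in> chains I C m. d x = 0} (adj (chains I C m) (\<Psi> m) (adj (mchains I C M m) (\<Phi> m) s) - s) = 0"
proof (rule oproj_eq_0)
  show "0 \<in> {x \<in> chains I C m. d x = 0}"
    using subspace_0[OF subspace_chains] linear_on_0[OF linear_on_d] by blast
  obtain G1 where G1: "finite G1" "mchains I C M m = span G1" by (rule mchains_span)
  obtain G2 where G2: "finite G2" "chains I C m = span G2" by (rule chains_span)
  let ?z = "adj (mchains I C M m) (\<Phi> m) s"
  let ?y = "adj (chains I C m) (\<Psi> m) ?z"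
  have "linear_on (span G1) (\<Phi> m)"
    using linear_on_subset[OF linear_on_Phi[of m] mchains_subset_chains[of M m]] G1(2) by simp
  then have z: "inner (\<Phi> m a) s = inner a ?z" if "a \<in> mchains I C M m" for a
    using adj_span(2)[OF G1(1)] that G1(2) by simp
  have "linear_on (span G2) (\<Psi> m)" using linear_on_Psi[of m] G2(2) by simp
  then have y: "inner (\<Psi> m a) ?z = inner a ?y" if "a \<in> chains I C m" for a
    using adj_span(2)[OF G2(1)] that G2(2) by simp
  show "\<forall>w\<in>{x \<in> chains I C m. d x = 0}. inner (?y - s) w = 0"
  proof
    fix w assume "w \<in> {x \<in> chains I C m. d x = 0}"
    then have w: "w \<in> chains I C m" "d w = 0" by auto
    have "inner ?y w = inner (\<Psi> m w) ?z" using y[OF w(1)] by (simp add: inner_commute)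
    also have "\<dots> = inner (\<Phi> m (\<Psi> m w)) s" using z[OF Psi_in_mchains[OF w(1)]] by simp
    also have "\<dots> = inner s w" using fix_cycles[OF w] by (simp add: inner_commute)
    finally show "inner (?y - s) w = 0" by (simp add: inner_diff_left)
  qed
qed

end

theorem mainTheorem2:
  fixes I :: "nat \<Rightarrow> 'c set" and C :: "'c \<Rightarrow> 'v::real_inner set" and d :: "'v \<Rightarrow> 'v"
    and M :: "('c \<times> 'c) set" and n :: nat
  assumes "fin_based_complex I C d"
    and "morse_matching I C d M"
  shows "((\<forall>s\<in>chains I C n.
             oproj {x\<in>chains I C n. adj (chains I C (Suc n)) d x = 0}
               (Phi I C d M n (Psi I C d M n s) - s) = 0) \<and>
          (\<forall>m. n = Suc m \<longrightarrow>
             (\<forall>s\<in>chains I C m.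
                oproj {x\<in>chains I C m. d x = 0}
                  (adj (chains I C m) (Psi I C d M m) (adj (mchains I C M m) (Phi I C d M m) s) - s) = 0)))
         \<longleftrightarrow> nfree I M n"
proof -
  interpret morse_complex I C d M by unfold_locales (rule assms)+
  have "(\<forall>s\<in>chains I C n.
          oproj {x\<in>chains I C n. adj (chains I C (Suc n)) d x = 0} (\<Phi> n (\<Psi> n s) - s) = 0)
        \<longleftrightarrow> nfree I M n"
    unfolding nfree_iff_Phi_Psi_minus_id_boundaries
    using oproj_ker_boundary_adj_eq_0_iff[OF Phi_Psi_minus_id_in_chains] by blast
  moreover have "oproj {x\<in>chains I C m. d x = 0}
      (adj (chains I C m) (\<Psi> m) (adj (mchains I C M m) (\<Phi> m) s) - s) = 0"
    if "nfree I M n" "n = Suc m" "s \<in> chains I C m" for m s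
    using oproj_cycles_eq_0_if_Phi_Psi_fixes_cycles[OF Phi_Psi_cycle] that by blast
  ultimately show ?thesis by blast
qed

end
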